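(* For $L\in T^r(V^* )$ define $\Psi_L(X,w)=L(X.w)$ for $X\in\mathbf{E}$, $w\in T^r(V)$, where $X.(w_1\otimes\cdots\otimes w_r)=Xw_1\otimes\cdots\otimes Xw_r$. Then $\Psi_L\in\mathcal{P}^r[\mathbf{E}]\otimes_\Lambda T^r(V^* )$, the $\Lambda$-linear map $\Psi:L\mapsto\Psi_L$ has image contained in $\Gamma_r$, and $\Psi:T^r(V^* )\to\Gamma_r$ is an isomorphism of $\mathrm{GL}(V)$-modules, where $\mathrm{GL}(V)$ acts on $T^r(V^* )$ by the diagonal action $\rho_r^*$ and on $\Gamma_r$ by $\hat L$.
   Context: $\Lambda=\varinjlim\wedge(\mathbb{C}^N)$ is the infinite Grassmann algebra ($\mathbb{Z}_2$-graded, supercommutative; modules are $\mathbb{Z}_2$-graded with $\lambda v=(-1)^{[\lambda][v]}v\lambda$; $\Lambda$-linear means $T(v\lambda)=T(v)\lambda$). $V_{\mathbb{C}}$ is a finite-dimensional $\mathbb{Z}_2$-graded complex vector space, $V=V_{\mathbb{C}}\otimes\Lambda$, $\mathrm{GL}(V)$ the group of invertible even $\Lambda$-linear endomorphisms, $\mathbf{E}=\mathrm{End}_\Lambda(V)_{\bar0}$. $V^*=\mathrm{Hom}_\Lambda(V,\Lambda)$ with $(g\bar v)(w)=\bar v(g^{-1}w)$, and $T^r(V^* )=(V^* )^{\otimes_\Lambda r}$ with diagonal action $\rho^*_r$; $T^r(V^* )$ is identified with $T^r(V)^*$ via the pairing $\gamma(\bar v_1\otimes\cdots\otimes\bar v_r\otimes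 w_1\otimes\cdots\otimes w_r)=(-1)^J\prod_i\bar v_i(w_i)$, $J=\sum_\mu[w_\mu]([\bar v_{\mu+1}]+\cdots+[\bar v_r])$. Polynomial functions on $\mathbf{E}=(\mathrm{End}_{\mathbb{C}}(V_{\mathbb{C}})\otimes\Lambda)_{\bar0}$: with respect to a homogeneous basis $b_k$ of $\mathrm{End}_{\mathbb{C}}(V_{\mathbb{C}})$, functions $\sum_kb_k\lambda_k\mapsto$ finite $\Lambda$-linear combinations of monomials in the $\lambda_k$; $\mathcal{P}^r[\mathbf{E}]$ denotes those homogeneous of total degree $r$. Elements of $\mathcal{P}^r[\mathbf{E}]\otimes_\Lambda T^r(V^* )$ are regarded as functions on $\mathbf{E}\times T^r(V)$. For $g\in\mathrm{GL}(V)$: $(L_gf)(X)=f(g^{-1}X)$, $(R_gf)(X)=f(Xg)$; $\hat L_g=L_g\otimes\mathrm{id}$, $\hat R_g=R_g\otimes\rho^*_r(g)$, so $(\hat R_g\Phi)(X,w)=\Phi(Xg,g^{-1}w)$. $\Gamma_r=(\mathcal{P}^r[\mathbf{E}]\otimes_\Lambda T^r(V^* ))^{\hat R(\mathrm{GL}(V))}$ is the submodule of $\hat R$-invariants. *)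

theory Defs
  imports Complex_Main
begin

text \<open>An element of \<Lambda> is written as sum over finite sets S of nat of a S e_S, where
  e_S = e_{s1} ... e_{sk} with s1 < ... < sk. We represent it by its coefficient function.\<close>

type_synonym grass = "nat set \<Rightarrow> complex"

definition Lam :: "grass set" where
  "Lam = {a. finite {S. a S \<noteq> 0} \<and> (\<forall>S. a S \<noteq> 0 \<longrightarrow> finite S)}"

definition gzero :: grass where "gzero = (\<lambda>S. 0)"
definition gone :: grass where "gone = (\<lambda>S. if S = {} then 1 else 0)"
definition gadd :: "grass \<Rightarrow> grass \<Rightarrow> grass" where "gadd a b = (\<lambda>S. a S + b S)"
definition gscale :: "complex \<Rightarrow> grass \<Rightarrow> grass" where "gscale c a = (\<lambda>S. c * a S)"

text \<open>sign of e_T e_U = gsign T U * e_(T \<union> U) for disjoint T, U\<close>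
definition gsign :: "nat set \<Rightarrow> nat set \<Rightarrow> complex" where
  "gsign T U = (-1) ^ card {(i, j). i \<in> T \<and> j \<in> U \<and> j < i}"

definition gmul :: "grass \<Rightarrow> grass \<Rightarrow> grass" where
  "gmul a b = (\<lambda>S. if finite S then (\<Sum>T\<in>Pow S. gsign T (S - T) * a T * b (S - T)) else 0)"

definition gsum :: "('i \<Rightarrow> grass) \<Rightarrow> 'i set \<Rightarrow> grass" where
  "gsum F K = (\<lambda>S. \<Sum>k\<in>K. F k S)"

definition glsum :: "grass list \<Rightarrow> grass" where
  "glsum xs = foldr gadd xs gzero"

definition gprod :: "grass list \<Rightarrow> grass" where
  "gprod xs = foldr gmul xs gone"

text \<open>homogeneity: hom p a means a has parity p (True = odd)\<close>
definition hom :: "bool \<Rightarrow> grass \<Rightarrow> bool" where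
  "hom p a = (\<forall>S. a S \<noteq> 0 \<longrightarrow> odd (card S) = p)"

section \<open>V = V_C \<otimes> \<Lambda>, with V_C of superdimension (m|n)\<close>

text \<open>Homogeneous basis e_0,...,e_(m+n-1) of V_C; e_i is odd iff m \<le> i.\<close>
definition pty :: "nat \<Rightarrow> nat \<Rightarrow> bool" where "pty m i = (m \<le> i)"

type_synonym mat = "nat \<Rightarrow> nat \<Rightarrow> grass"

text \<open>E = even \<Lambda>-linear endomorphisms of V, as matrices: X e_j = \<Sum>_i e_i X i j.\<close>
definition Emat :: "nat \<Rightarrow> nat \<Rightarrow> mat set" where
  "Emat m n = {X. \<forall>i j. (i < m + n \<and> j < m + n \<longrightarrow> X i j \<in> Lam \<and> hom (pty m i \<noteq> pty m j) (X i j))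
                 \<and> (\<not> (i < m + n \<and> j < m + n) \<longrightarrow> X i j = gzero)}"

definition mmul :: "nat \<Rightarrow> nat \<Rightarrow> mat \<Rightarrow> mat \<Rightarrow> mat" where
  "mmul m n X Y = (\<lambda>i j. if i < m + n \<and> j < m + n then gsum (\<lambda>k. gmul (X i k) (Y k j)) {..<m + n} else gzero)"

definition mone :: "nat \<Rightarrow> nat \<Rightarrow> mat" where
  "mone m n = (\<lambda>i j. if i < m + n \<and> j = i then gone else gzero)"

definition GLV :: "nat \<Rightarrow> nat \<Rightarrow> mat set" where
  "GLV m n = {g \<in> Emat m n. \<exists>h \<in> Emat m n. mmul m n g h = mone m n \<and> mmul m n h g = mone m n}"

definition ginv :: "nat \<Rightarrow> nat \<Rightarrow> mat \<Rightarrow> mat" where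
  "ginv m n g = (SOME h. h \<in> Emat m n \<and> mmul m n g h = mone m n \<and> mmul m n h g = mone m n)"

text \<open>w = \<Sum>_I e_I w_I, with e_I = e_(i_0) \<otimes> ... \<otimes> e_(i_(r-1)), I a list of length r.\<close>
type_synonym tvec = "nat list \<Rightarrow> grass"

definition Idx :: "nat \<Rightarrow> nat \<Rightarrow> nat \<Rightarrow> nat list set" where
  "Idx m n r = {I. length I = r \<and> set I \<subseteq> {..<m + n}}"

definition TrV :: "nat \<Rightarrow> nat \<Rightarrow> nat \<Rightarrow> tvec set" where
  "TrV m n r = {w. (\<forall>I \<in> Idx m n r. w I \<in> Lam) \<and> (\<forall>I. I \<notin> Idx m n r \<longrightarrow> w I = gzero)}"

definition tadd :: "tvec \<Rightarrow> tvec \<Rightarrow> tvec" where "tadd w w' = (\<lambda>I. gadd (w I) (w' I))"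
definition trmul :: "tvec \<Rightarrow> grass \<Rightarrow> tvec" where "trmul w c = (\<lambda>I. gmul (w I) c)"

text \<open>X.w for X \<in> E: X.(e_I) = X e_(i_0) \<otimes> ... \<otimes> X e_(i_(r-1)), extended \<Lambda>-linearly.
  Moving the (homogeneous) coefficients X j_a i_a to the right produces the Koszul sign.\<close>
definition tsign :: "nat \<Rightarrow> nat \<Rightarrow> nat list \<Rightarrow> nat list \<Rightarrow> complex" where
  "tsign m r J I = (-1) ^ card {(a, b). a < b \<and> b < r \<and> (pty m (J ! a) \<noteq> pty m (I ! a)) \<and> pty m (J ! b)}"

definition tact :: "nat \<Rightarrow> nat \<Rightarrow> nat \<Rightarrow> mat \<Rightarrow> tvec \<Rightarrow> tvec" where
  "tact m n r X w = (\<lambda>J. if J \<in> Idx m n r then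
      gsum (\<lambda>I. gscale (tsign m r J I) (gmul (gprod (map (\<lambda>a. X (J ! a) (I ! a)) [0..<r])) (w I))) (Idx m n r)
    else gzero)"

section \<open>T^r(V^*) identified with T^r(V)^* = Hom_\<Lambda>(T^r(V), \<Lambda>) (via the pairing \<gamma>)\<close>

type_synonym tdual = "tvec \<Rightarrow> grass"

definition TrVd :: "nat \<Rightarrow> nat \<Rightarrow> nat \<Rightarrow> tdual set" where
  "TrVd m n r = {L. (\<forall>w \<in> TrV m n r. L w \<in> Lam)
     \<and> (\<forall>w \<in> TrV m n r. \<forall>w' \<in> TrV m n r. L (tadd w w') = gadd (L w) (L w'))
     \<and> (\<forall>w \<in> TrV m n r. \<forall>c \<in> Lam. L (trmul w c) = gmul (L w) c)
     \<and> (\<forall>w. w \<notin> TrV m n r \<longrightarrow> L w = gzero)}"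

definition dadd :: "tdual \<Rightarrow> tdual \<Rightarrow> tdual" where "dadd L L' = (\<lambda>w. gadd (L w) (L' w))"
definition dsmul :: "grass \<Rightarrow> tdual \<Rightarrow> tdual" where "dsmul c L = (\<lambda>w. gmul c (L w))"

definition rho_dual :: "nat \<Rightarrow> nat \<Rightarrow> nat \<Rightarrow> mat \<Rightarrow> tdual \<Rightarrow> tdual" where
  "rho_dual m n r g L = (\<lambda>w. if w \<in> TrV m n r then L (tact m n r (ginv m n g) w) else gzero)"

text \<open>Coordinates of X \<in> E w.r.t. the basis of elementary matrices are the entries X i j
  (up to a fixed sign per coordinate).\<close>
definition Pr :: "nat \<Rightarrow> nat \<Rightarrow> nat \<Rightarrow> (mat \<Rightarrow> grass) set" where
  "Pr m n r = {f. (\<forall>X. X \<notin> Emat m n \<longrightarrow> f X = gzero) \<and>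
     (\<exists>cs :: (grass \<times> (nat \<times> nat) list) list.
        (\<forall>(c, ks) \<in> set cs. c \<in> Lam \<and> length ks = r \<and> (\<forall>(i, j) \<in> set ks. i < m + n \<and> j < m + n)) \<and>
        (\<forall>X \<in> Emat m n. f X = glsum (map (\<lambda>(c, ks). gmul c (gprod (map (\<lambda>(i, j). X i j) ks))) cs)))}"

type_synonym fn = "mat \<times> tvec \<Rightarrow> grass"

definition PT :: "nat \<Rightarrow> nat \<Rightarrow> nat \<Rightarrow> fn set" where
  "PT m n r = {\<Phi>. (\<forall>X w. \<not> (X \<in> Emat m n \<and> w \<in> TrV m n r) \<longrightarrow> \<Phi> (X, w) = gzero) \<and>
     (\<exists>ps :: ((mat \<Rightarrow> grass) \<times> tdual) list.
        (\<forall>(f, L) \<in> set ps. f \<in> Pr m n r \<and> L \<in> TrVd m n r) \<and>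
        (\<forall>X \<in> Emat m n. \<forall>w \<in> TrV m n r. \<Phi> (X, w) = glsum (map (\<lambda>(f, L). gmul (f X) (L w)) ps)))}"

definition fadd :: "fn \<Rightarrow> fn \<Rightarrow> fn" where "fadd F G = (\<lambda>x. gadd (F x) (G x))"
definition fsmul :: "grass \<Rightarrow> fn \<Rightarrow> fn" where "fsmul c F = (\<lambda>x. gmul c (F x))"

definition Rhat :: "nat \<Rightarrow> nat \<Rightarrow> nat \<Rightarrow> mat \<Rightarrow> fn \<Rightarrow> fn" where
  "Rhat m n r g \<Phi> = (\<lambda>(X, w). if X \<in> Emat m n \<and> w \<in> TrV m n r
      then \<Phi> (mmul m n X g, tact m n r (ginv m n g) w) else gzero)"

definition Lhat :: "nat \<Rightarrow> nat \<Rightarrow> nat \<Rightarrow> mat \<Rightarrow> fn \<Rightarrow> fn" where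
  "Lhat m n r g \<Phi> = (\<lambda>(X, w). if X \<in> Emat m n \<and> w \<in> TrV m n r
      then \<Phi> (mmul m n (ginv m n g) X, w) else gzero)"

definition Gamma :: "nat \<Rightarrow> nat \<Rightarrow> nat \<Rightarrow> fn set" where
  "Gamma m n r = {\<Phi> \<in> PT m n r. \<forall>g \<in> GLV m n. Rhat m n r g \<Phi> = \<Phi>}"

definition Psi :: "nat \<Rightarrow> nat \<Rightarrow> nat \<Rightarrow> tdual \<Rightarrow> fn" where
  "Psi m n r L = (\<lambda>(X, w). if X \<in> Emat m n \<and> w \<in> TrV m n r then L (tact m n r X w) else gzero)"

end

theory Submission
  imports Defs "Jordan_Normal_Form.Char_Poly" "HOL-Computational_Algebra.Polynomial"
begin

text \<open>\<Psi>_L lies in PT because expanding L(X.w) in the entries of X and the coordinates of w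
  exhibits it as a sum of degree-r monomials in the entries of X times coordinate functionals
  of w. Invariance and equivariance come from (X Y).w = X.(Y.w), and \<Psi> is injective because
  \<Psi>_L(1, w) = L w. Conversely, an invariant \<Phi> satisfies \<Phi>(g, w) = \<Phi>(1, g.w) = \<Psi>_L(g, w) with
  L = \<Phi>(1, -) for every invertible g. An even matrix over \<Lambda> is invertible as soon as its body
  is, so X + t is invertible for all but finitely many complex t; both sides being polynomial
  in t, they agree at t = 0.\<close>

section \<open>The Grassmann algebra as a ring\<close>

definition inversion_count :: "nat set \<Rightarrow> nat set \<Rightarrow> nat" where
  "inversion_count T U = card {(i, j). i \<in> T \<and> j \<in> U \<and> j < i}"

lemma gsign_inversion_count: "gsign T U = (-1) ^ inversion_count T U"
  unfolding gsign_def inversion_count_def by simp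

lemma inversion_count_Un_left:
  assumes "finite A" "finite B" "finite C" "A \<inter> B = {}"
  shows "inversion_count (A \<union> B) C = inversion_count A C + inversion_count B C"
proof -
  have e: "{(i, j). i \<in> A \<union> B \<and> j \<in> C \<and> j < i} =
    {(i, j). i \<in> A \<and> j \<in> C \<and> j < i} \<union> {(i, j). i \<in> B \<and> j \<in> C \<and> j < i}" by auto
  have f1: "finite {(i, j). i \<in> A \<and> j \<in> C \<and> j < i}"
    by (rule finite_subset[of _ "A \<times> C"]) (use assms in auto)
  have f2: "finite {(i, j). i \<in> B \<and> j \<in> C \<and> j < i}"
    by (rule finite_subset[of _ "B \<times> C"]) (use assms in auto)
  show ?thesis unfolding inversion_count_def e
    by (rule card_Un_disjoint[OF f1 f2]) (use assms in auto)
qed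

lemma inversion_count_Un_right:
  assumes "finite A" "finite B" "finite C" "B \<inter> C = {}"
  shows "inversion_count A (B \<union> C) = inversion_count A B + inversion_count A C"
proof -
  have e: "{(i, j). i \<in> A \<and> j \<in> B \<union> C \<and> j < i} =
    {(i, j). i \<in> A \<and> j \<in> B \<and> j < i} \<union> {(i, j). i \<in> A \<and> j \<in> C \<and> j < i}" by auto
  have f1: "finite {(i, j). i \<in> A \<and> j \<in> B \<and> j < i}"
    by (rule finite_subset[of _ "A \<times> B"]) (use assms in auto)
  have f2: "finite {(i, j). i \<in> A \<and> j \<in> C \<and> j < i}"
    by (rule finite_subset[of _ "A \<times> C"]) (use assms in auto)
  show ?thesis unfolding inversion_count_def e
    by (rule card_Un_disjoint[OF f1 f2]) (use assms in auto)
qed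

lemma inversion_count_swap:
  assumes "finite A" "finite B" "A \<inter> B = {}"
  shows "inversion_count A B + inversion_count B A = card A * card B"
proof -
  have e: "A \<times> B = {(i, j). i \<in> A \<and> j \<in> B \<and> j < i} \<union> {(i, j). i \<in> A \<and> j \<in> B \<and> i < j}"
    using assms by auto
  have f1: "finite {(i, j). i \<in> A \<and> j \<in> B \<and> j < i}"
    by (rule finite_subset[of _ "A \<times> B"]) (use assms in auto)
  have f2: "finite {(i, j). i \<in> A \<and> j \<in> B \<and> i < j}"
    by (rule finite_subset[of _ "A \<times> B"]) (use assms in auto)
  have c2: "card {(i, j). i \<in> A \<and> j \<in> B \<and> i < j} = inversion_count B A"
  proof -
    have "{(i, j). i \<in> A \<and> j \<in> B \<and> i < j} = (\<lambda>(x,y). (y,x)) ` {(i, j). i \<in> B \<and> j \<in> A \<and> j < i}"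
      by auto
    moreover have "inj_on (\<lambda>(x,y). (y,x)) {(i, j). i \<in> B \<and> j \<in> A \<and> j < i}"
      by (auto simp: inj_on_def)
    ultimately show ?thesis unfolding inversion_count_def by (simp add: card_image)
  qed
  have "card A * card B = card (A \<times> B)" by (simp add: card_cartesian_product)
  also have "\<dots> = inversion_count A B + inversion_count B A"
    unfolding e inversion_count_def[of A B] c2[symmetric]
    by (rule card_Un_disjoint[OF f1 f2]) auto
  finally show ?thesis by simp
qed

lemma gsign_assoc:
  assumes "finite A" "finite B" "finite C" "A \<inter> B = {}" "A \<inter> C = {}" "B \<inter> C = {}"
  shows "gsign A B * gsign (A \<union> B) C = gsign A (B \<union> C) * gsign B C"
  using assms by (simp add: gsign_inversion_count inversion_count_Un_left inversion_count_Un_right power_add)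


lemma gsign_empty_left[simp]: "gsign {} U = 1" by (simp add: gsign_def)
lemma gsign_empty_right[simp]: "gsign T {} = 1" by (simp add: gsign_def)

lemma gmul_assoc: "gmul (gmul a b) c = gmul a (gmul b c)"
proof
  fix S :: "nat set"
  show "gmul (gmul a b) c S = gmul a (gmul b c) S"
  proof (cases "finite S")
    case False then show ?thesis by (simp add: gmul_def)
  next
    case fin: True
    define g where "g = (\<lambda>(A, B). gsign A B * gsign (A \<union> B) (S - A - B) * a A * b B * c (S - A - B))"
    have "gmul (gmul a b) c S = (\<Sum>T\<in>Pow S. \<Sum>A\<in>Pow T. gsign T (S - T) * (gsign A (T - A) * a A * b (T - A)) * c (S - T))"
      using fin by (simp add: gmul_def sum_distrib_left sum_distrib_right finite_subset Pow_def)
    also have "\<dots> = (\<Sum>(T, A)\<in>Sigma (Pow S) Pow. gsign T (S - T) * (gsign A (T - A) * a A * b (T - A)) * c (S - T))"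
      using fin by (subst sum.Sigma) (auto intro: finite_subset)
    also have "\<dots> = (\<Sum>p\<in>Sigma (Pow S) (\<lambda>A. Pow (S - A)). g p)"
    proof (rule sum.reindex_bij_witness[where i = "\<lambda>(A, B). (A \<union> B, A)" and j = "\<lambda>(T, A). (A, T - A)"])
      fix p assume "p \<in> Sigma (Pow S) Pow"
      then obtain T A where p: "p = (T, A)" "T \<subseteq> S" "A \<subseteq> T" by auto
      then show "(case (case p of (T, A) \<Rightarrow> (A, T - A)) of (A, B) \<Rightarrow> (A \<union> B, A)) = p" by auto
      show "(case p of (T, A) \<Rightarrow> (A, T - A)) \<in> Sigma (Pow S) (\<lambda>A. Pow (S - A))" using p by auto
      have e1: "A \<union> (T - A) = T" "S - A - (T - A) = S - T" using p by auto
      show "g (case p of (T, A) \<Rightarrow> (A, T - A))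
          = (case p of (T, A) \<Rightarrow> gsign T (S - T) * (gsign A (T - A) * a A * b (T - A)) * c (S - T))"
        using p by (simp add: g_def e1 Un_absorb1)
    next
      fix q assume "q \<in> Sigma (Pow S) (\<lambda>A. Pow (S - A))"
      then obtain A B where q: "q = (A, B)" "A \<subseteq> S" "B \<subseteq> S - A" by auto
      then show "(case (case q of (A, B) \<Rightarrow> (A \<union> B, A)) of (T, A) \<Rightarrow> (A, T - A)) = q" by auto
      show "(case q of (A, B) \<Rightarrow> (A \<union> B, A)) \<in> Sigma (Pow S) Pow" using q by auto
    qed
    also have "\<dots> = (\<Sum>A\<in>Pow S. \<Sum>B\<in>Pow (S - A). g (A, B))"
      using fin by (subst sum.Sigma) (auto intro: finite_subset)
    also have "\<dots> = (\<Sum>A\<in>Pow S. \<Sum>B\<in>Pow (S - A). gsign A (S - A) * a A * (gsign B (S - A - B) * b B * c (S - A - B)))"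
    proof (rule sum.cong[OF refl], rule sum.cong[OF refl])
      fix A B assume A: "A \<in> Pow S" and B: "B \<in> Pow (S - A)"
      have fA: "finite A" "finite B" "finite (S - A - B)" using A B fin by (auto intro: finite_subset)
      have e: "B \<union> (S - A - B) = S - A" using B by auto
      have "gsign A B * gsign (A \<union> B) (S - A - B) = gsign A (B \<union> (S - A - B)) * gsign B (S - A - B)"
        by (rule gsign_assoc) (use fA B in auto)
      then show "g (A, B) = gsign A (S - A) * a A * (gsign B (S - A - B) * b B * c (S - A - B))"
        unfolding g_def e by (simp add: algebra_simps)
    qed
    also have "\<dots> = gmul a (gmul b c) S"
      using fin by (simp add: gmul_def sum_distrib_left finite_subset Diff_Diff_Int)
    finally show ?thesis .
  qed
qed

lemma gmul_nonzeroE: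
  assumes "gmul a b S \<noteq> 0"
  obtains T where "finite S" "T \<subseteq> S" "a T \<noteq> 0" "b (S - T) \<noteq> 0"
proof -
  have fin: "finite S" using assms by (auto simp: gmul_def split: if_splits)
  then have "(\<Sum>T\<in>Pow S. gsign T (S - T) * a T * b (S - T)) \<noteq> 0" using assms by (simp add: gmul_def)
  then obtain T where "T \<in> Pow S" "gsign T (S - T) * a T * b (S - T) \<noteq> 0"
    by (meson sum.neutral)
  then show ?thesis using that fin by auto
qed

lemma Lam_gzero[simp]: "gzero \<in> Lam" by (simp add: Lam_def gzero_def)
lemma Lam_gone[simp]: "gone \<in> Lam" by (simp add: Lam_def gone_def)

lemma Lam_gadd[simp]: assumes "a \<in> Lam" "b \<in> Lam" shows "gadd a b \<in> Lam"
proof -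
  have "{S. gadd a b S \<noteq> 0} \<subseteq> {S. a S \<noteq> 0} \<union> {S. b S \<noteq> 0}" by (auto simp: gadd_def)
  then show ?thesis using assms unfolding Lam_def by (auto simp: gadd_def intro: finite_subset)
qed

lemma Lam_gscale[simp]: assumes "a \<in> Lam" shows "gscale c a \<in> Lam"
proof -
  have "{S. gscale c a S \<noteq> 0} \<subseteq> {S. a S \<noteq> 0}" by (auto simp: gscale_def)
  then show ?thesis using assms unfolding Lam_def by (auto simp: gscale_def intro: finite_subset)
qed

lemma Lam_gmul[simp]: assumes "a \<in> Lam" "b \<in> Lam" shows "gmul a b \<in> Lam"
proof -
  have "{S. gmul a b S \<noteq> 0} \<subseteq> (\<lambda>(T, U). T \<union> U) ` ({S. a S \<noteq> 0} \<times> {S. b S \<noteq> 0})"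
  proof
    fix S assume "S \<in> {S. gmul a b S \<noteq> 0}"
    then obtain T where "T \<subseteq> S" "a T \<noteq> 0" "b (S - T) \<noteq> 0" by (auto elim: gmul_nonzeroE)
    then show "S \<in> (\<lambda>(T, U). T \<union> U) ` ({S. a S \<noteq> 0} \<times> {S. b S \<noteq> 0})"
      by (intro image_eqI[of _ _ "(T, S - T)"]) auto
  qed
  moreover have "finite ((\<lambda>(T, U). T \<union> U) ` ({S. a S \<noteq> 0} \<times> {S. b S \<noteq> 0}))"
    using assms by (auto simp: Lam_def)
  ultimately show ?thesis unfolding Lam_def by (auto intro: finite_subset elim: gmul_nonzeroE)
qed

lemma Lam_infinite: "a \<in> Lam \<Longrightarrow> infinite S \<Longrightarrow> a S = 0"
  by (auto simp: Lam_def)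

lemma gmul_gone_left: assumes "a \<in> Lam" shows "gmul gone a = a"
proof
  fix S show "gmul gone a S = a S"
  proof (cases "finite S")
    case True
    have "gmul gone a S = (\<Sum>T\<in>Pow S. gsign T (S - T) * gone T * a (S - T))"
      using True by (simp add: gmul_def)
    also have "\<dots> = (\<Sum>T\<in>Pow S. if T = {} then a S else 0)"
      by (rule sum.cong) (auto simp: gone_def)
    also have "\<dots> = a S" using True by (simp add: sum.delta')
    finally show ?thesis .
  qed (use assms in \<open>simp add: gmul_def Lam_infinite\<close>)
qed

lemma gmul_gone_right: assumes "a \<in> Lam" shows "gmul a gone = a"
proof
  fix S show "gmul a gone S = a S"
  proof (cases "finite S")
    case True
    have "gmul a gone S = (\<Sum>T\<in>Pow S. gsign T (S - T) * a T * gone (S - T))"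
      using True by (simp add: gmul_def)
    also have "\<dots> = (\<Sum>T\<in>Pow S. if T = S then a S else 0)"
      by (rule sum.cong) (auto simp: gone_def)
    also have "\<dots> = a S" using True by (simp add: sum.delta')
    finally show ?thesis .
  qed (use assms in \<open>simp add: gmul_def Lam_infinite\<close>)
qed

lemma gmul_gadd_left: "gmul (gadd a b) c = gadd (gmul a c) (gmul b c)"
  by (auto simp: gmul_def gadd_def sum.distrib algebra_simps)
lemma gmul_gadd_right: "gmul a (gadd b c) = gadd (gmul a b) (gmul a c)"
  by (auto simp: gmul_def gadd_def sum.distrib algebra_simps)
lemma gmul_gscale_left: "gmul (gscale c a) b = gscale c (gmul a b)"
  by (auto simp: gmul_def gscale_def sum_distrib_left algebra_simps)
lemma gmul_gscale_right: "gmul a (gscale c b) = gscale c (gmul a b)"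
  by (auto simp: gmul_def gscale_def sum_distrib_left algebra_simps)
lemma gmul_gzero_left: "gmul gzero a = gzero" by (auto simp: gmul_def gzero_def)
lemma gmul_gzero_right: "gmul a gzero = gzero" by (auto simp: gmul_def gzero_def)

lemma hom_gmul: assumes "Defs.hom p a" "Defs.hom q b" shows "Defs.hom (p \<noteq> q) (gmul a b)"
  unfolding Defs.hom_def
proof (intro allI impI)
  fix S assume "gmul a b S \<noteq> 0"
  then obtain T where T: "finite S" "T \<subseteq> S" "a T \<noteq> 0" "b (S - T) \<noteq> 0" by (auto elim: gmul_nonzeroE)
  have "card S = card T + card (S - T)" using T
    by (metis card_Diff_subset card_mono diff_add_inverse finite_subset le_add_diff_inverse)
  then show "odd (card S) = (p \<noteq> q)" using T assms unfolding Defs.hom_def by fastforce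
qed

lemma gsign_swap:
  assumes "finite T" "finite U" "T \<inter> U = {}"
  shows "gsign T U = (-1) ^ (card T * card U) * gsign U T"
proof -
  have "inversion_count T U + inversion_count U T = card T * card U" by (rule inversion_count_swap[OF assms])
  then have e: "card T * card U + inversion_count U T = inversion_count T U + 2 * inversion_count U T" by simp
  have "(-1::complex) ^ (card T * card U) * gsign U T = (-1) ^ (card T * card U + inversion_count U T)"
    by (simp add: gsign_inversion_count power_add)
  also have "\<dots> = (-1) ^ (inversion_count T U + 2 * inversion_count U T)" by (simp only: e)
  also have "\<dots> = gsign T U" by (simp add: gsign_inversion_count power_add power_mult)
  finally show ?thesis by simp
qed

lemma gmul_supercomm:
  assumes "Defs.hom p a" "Defs.hom q b"
  shows "gmul a b = gscale (if p \<and> q then -1 else 1) (gmul b a)"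
proof
  fix S show "gmul a b S = gscale (if p \<and> q then -1 else 1) (gmul b a) S"
  proof (cases "finite S")
    case fin: True
    have "gmul b a S = (\<Sum>U\<in>Pow S. gsign U (S - U) * b U * a (S - U))" using fin by (simp add: gmul_def)
    also have "\<dots> = (\<Sum>T\<in>Pow S. gsign (S - T) T * b (S - T) * a T)"
      by (rule sum.reindex_bij_witness[where i = "\<lambda>T. S - T" and j = "\<lambda>T. S - T"])
         (auto simp: Diff_Diff_Int Int_absorb1)
    finally have e: "gmul b a S = \<dots>" .
    have "gmul a b S = (\<Sum>T\<in>Pow S. (if p \<and> q then -1 else 1) * (gsign (S - T) T * b (S - T) * a T))"
    proof -
      have "gmul a b S = (\<Sum>T\<in>Pow S. gsign T (S - T) * a T * b (S - T))" using fin by (simp add: gmul_def)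
      also have "\<dots> = (\<Sum>T\<in>Pow S. (if p \<and> q then -1 else 1) * (gsign (S - T) T * b (S - T) * a T))"
      proof (rule sum.cong[OF refl])
        fix T assume T: "T \<in> Pow S"
        show "gsign T (S - T) * a T * b (S - T) = (if p \<and> q then -1 else 1) * (gsign (S - T) T * b (S - T) * a T)"
        proof (cases "a T = 0 \<or> b (S - T) = 0")
          case False
          then have pa: "odd (card T) = p" and pb: "odd (card (S - T)) = q" using assms by (auto simp: Defs.hom_def)
          have fT: "finite T" "finite (S - T)" using T fin by (auto intro: finite_subset)
          have sw: "gsign T (S - T) = (-1) ^ (card T * card (S - T)) * gsign (S - T) T"
            by (rule gsign_swap) (use fT in auto)
          have "(-1::complex) ^ (card T * card (S - T)) = (if p \<and> q then -1 else 1)"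
            using pa pb by (cases "even (card T * card (S - T))") auto
          then show ?thesis using sw by simp
        qed auto
      qed
      finally show ?thesis .
    qed
    then show ?thesis using e by (simp add: gscale_def sum_distrib_left)
  qed (simp add: gmul_def gscale_def)
qed


text \<open>Packaging the coefficient functions in Lam as a type makes them a ring, so that the
  matrix library of Jordan_Normal_Form applies to matrices over \<Lambda>.\<close>

typedef grassmann = Lam by (intro exI[of _ gzero]) simp

lemma Rep_grassmann_Lam[simp]: "Rep_grassmann a \<in> Lam" using Rep_grassmann by blast
lemma Abs_grassmann_inverse_Lam[simp]: "a \<in> Lam \<Longrightarrow> Rep_grassmann (Abs_grassmann a) = a"
  by (simp add: Abs_grassmann_inverse)

instantiation grassmann :: ring_1
begin
definition "0 = Abs_grassmann gzero"
definition "1 = Abs_grassmann gone"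
definition "a + b = Abs_grassmann (gadd (Rep_grassmann a) (Rep_grassmann b))"
definition "- a = Abs_grassmann (gscale (-1) (Rep_grassmann a))"
definition "a - b = Abs_grassmann (gadd (Rep_grassmann a) (gscale (-1) (Rep_grassmann b)))"
definition "a * b = Abs_grassmann (gmul (Rep_grassmann a) (Rep_grassmann b))"

lemma Rep_zero[simp]: "Rep_grassmann 0 = gzero" by (simp add: zero_grassmann_def Abs_grassmann_inverse)
lemma Rep_one[simp]: "Rep_grassmann 1 = gone" by (simp add: one_grassmann_def Abs_grassmann_inverse)
lemma Rep_plus[simp]: "Rep_grassmann (a + b) = gadd (Rep_grassmann a) (Rep_grassmann b)"
  by (simp add: plus_grassmann_def Abs_grassmann_inverse)
lemma Rep_uminus[simp]: "Rep_grassmann (- a) = gscale (-1) (Rep_grassmann a)"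
  by (simp add: uminus_grassmann_def Abs_grassmann_inverse)
lemma Rep_minus[simp]: "Rep_grassmann (a - b) = gadd (Rep_grassmann a) (gscale (-1) (Rep_grassmann b))"
  by (simp add: minus_grassmann_def Abs_grassmann_inverse)
lemma Rep_times[simp]: "Rep_grassmann (a * b) = gmul (Rep_grassmann a) (Rep_grassmann b)"
  by (simp add: times_grassmann_def Abs_grassmann_inverse)

instance
proof
  fix a b c :: grassmann
  show "a + b + c = a + (b + c)" by (simp add: Rep_grassmann_inject[symmetric] gadd_def add.assoc)
  show "a + b = b + a" by (simp add: Rep_grassmann_inject[symmetric] gadd_def add.commute)
  show "0 + a = a" by (simp add: Rep_grassmann_inject[symmetric] gadd_def gzero_def)
  show "- a + a = 0" by (simp add: Rep_grassmann_inject[symmetric] gadd_def gzero_def gscale_def)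
  show "a - b = a + - b" by (simp add: Rep_grassmann_inject[symmetric])
  show "a * b * c = a * (b * c)" by (simp add: Rep_grassmann_inject[symmetric] gmul_assoc)
  show "1 * a = a" by (simp add: Rep_grassmann_inject[symmetric] gmul_gone_left)
  show "a * 1 = a" by (simp add: Rep_grassmann_inject[symmetric] gmul_gone_right)
  show "(a + b) * c = a * c + b * c" by (simp add: Rep_grassmann_inject[symmetric] gmul_gadd_left)
  show "a * (b + c) = a * b + a * c" by (simp add: Rep_grassmann_inject[symmetric] gmul_gadd_right)
  show "(0::grassmann) \<noteq> 1" by (simp add: Rep_grassmann_inject[symmetric] gzero_def gone_def fun_eq_iff)
qed
end

lemma Rep_sum: "Rep_grassmann (sum f A) = gsum (\<lambda>x. Rep_grassmann (f x)) A"
proof (cases "finite A")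
  case True then show ?thesis
    by (induction A rule: finite_induct) (auto simp: gsum_def gadd_def gzero_def)
qed (simp add: gsum_def gzero_def)

lemma gsum_Rep: "gsum (\<lambda>x. Rep_grassmann (f x)) A = Rep_grassmann (sum f A)" by (simp add: Rep_sum)

lemma Rep_sum_list: "Rep_grassmann (sum_list xs) = glsum (map Rep_grassmann xs)"
  by (induction xs) (auto simp: glsum_def)

lemma Rep_prod_list: "Rep_grassmann (prod_list xs) = gprod (map Rep_grassmann xs)"
  by (induction xs) (auto simp: gprod_def)


definition scalar :: "complex \<Rightarrow> grassmann" where "scalar c = Abs_grassmann (gscale c gone)"

lemma Rep_scalar: "Rep_grassmann (scalar c) = gscale c gone" by (simp add: scalar_def)

lemma scalar_mult_left_Rep: "Rep_grassmann (scalar c * a) = gscale c (Rep_grassmann a)"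
  unfolding Rep_times Rep_scalar gmul_gscale_left gmul_gone_left[OF Rep_grassmann_Lam] ..
lemma scalar_mult_right_Rep: "Rep_grassmann (a * scalar c) = gscale c (Rep_grassmann a)"
  unfolding Rep_times Rep_scalar gmul_gscale_right gmul_gone_right[OF Rep_grassmann_Lam] ..

lemma scalar_comm: "scalar c * a = a * scalar c"
  by (simp add: Rep_grassmann_inject[symmetric] scalar_mult_left_Rep scalar_mult_right_Rep del: Rep_times)

lemma scalar_mult: "scalar (a * b) = scalar a * scalar b"
  by (simp add: Rep_grassmann_inject[symmetric] scalar_mult_left_Rep del: Rep_times) (simp add: Rep_scalar gscale_def mult.assoc)
lemma scalar_add: "scalar (a + b) = scalar a + scalar b"
  by (simp add: Rep_grassmann_inject[symmetric] Rep_scalar gscale_def gadd_def algebra_simps)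
lemma scalar_one[simp]: "scalar 1 = 1"
  by (simp add: Rep_grassmann_inject[symmetric] Rep_scalar gscale_def)
lemma scalar_zero[simp]: "scalar 0 = 0"
  by (simp add: Rep_grassmann_inject[symmetric] Rep_scalar gscale_def gzero_def)
lemma scalar_sum: "scalar (sum f A) = (\<Sum>x\<in>A. scalar (f x))"
  by (induction A rule: infinite_finite_induct) (auto simp: scalar_add)

lemma gscale_Rep: "gscale c (Rep_grassmann a) = Rep_grassmann (scalar c * a)" by (rule scalar_mult_left_Rep[symmetric])

definition parity :: "bool \<Rightarrow> grassmann \<Rightarrow> bool" where "parity p a = Defs.hom p (Rep_grassmann a)"

lemma parity_zero[simp]: "parity p 0" by (simp add: parity_def Defs.hom_def gzero_def)
lemma parity_one[simp]: "parity False 1" by (simp add: parity_def Defs.hom_def gone_def)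
lemma parity_scalar[simp]: "parity False (scalar c)" by (simp add: parity_def Defs.hom_def Rep_scalar gscale_def gone_def)
lemma parity_add: assumes "parity p a" "parity p b" shows "parity p (a + b)"
  unfolding parity_def Defs.hom_def Rep_plus
proof (intro allI impI)
  fix S assume "gadd (Rep_grassmann a) (Rep_grassmann b) S \<noteq> 0"
  then have "Rep_grassmann a S \<noteq> 0 \<or> Rep_grassmann b S \<noteq> 0" by (auto simp: gadd_def)
  then show "odd (card S) = p" using assms by (auto simp: parity_def Defs.hom_def)
qed
lemma parity_uminus: "parity p a \<Longrightarrow> parity p (- a)"
  by (auto simp: parity_def Defs.hom_def gscale_def)
lemma parity_diff: "parity p a \<Longrightarrow> parity p b \<Longrightarrow> parity p (a - b)"
  using parity_add[of p a "- b"] parity_uminus[of p b] by simp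
lemma parity_mult: "parity p a \<Longrightarrow> parity q b \<Longrightarrow> parity (p \<noteq> q) (a * b)"
  unfolding parity_def Rep_times by (rule hom_gmul)
lemma parity_sum: "(\<And>x. x \<in> A \<Longrightarrow> parity p (f x)) \<Longrightarrow> parity p (sum f A)"
  by (induction A rule: infinite_finite_induct) (auto intro: parity_add)
lemma parity_scalar_mult: "parity p a \<Longrightarrow> parity p (scalar c * a)"
  using parity_mult[of False "scalar c" p a] by simp

lemma supercomm:
  assumes "parity p a" "parity q b" shows "a * b = scalar (if p \<and> q then -1 else 1) * (b * a)"
proof -
  have e: "gmul (Rep_grassmann a) (Rep_grassmann b) = gscale (if p \<and> q then -1 else 1) (gmul (Rep_grassmann b) (Rep_grassmann a))"
    by (rule gmul_supercomm) (use assms in \<open>auto simp: parity_def\<close>)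
  show ?thesis unfolding Rep_grassmann_inject[symmetric] scalar_mult_left_Rep by (simp only: Rep_times e)
qed


lemma scalar_left_comm: "x * (scalar c * y) = scalar c * (x * y)"
  by (metis mult.assoc scalar_comm)

lemma gsum_cong: "(\<And>x. x \<in> K \<Longrightarrow> F x = G x) \<Longrightarrow> gsum F K = gsum G K"
  unfolding gsum_def by (intro ext sum.cong) auto

definition lift_mat :: "nat \<Rightarrow> nat \<Rightarrow> Defs.mat \<Rightarrow> grassmann mat" where
  "lift_mat m n X = mat (m + n) (m + n) (\<lambda>(i, j). Abs_grassmann (X i j))"
definition raw_mat :: "nat \<Rightarrow> nat \<Rightarrow> grassmann mat \<Rightarrow> Defs.mat" where
  "raw_mat m n A = (\<lambda>i j. if i < m + n \<and> j < m + n then Rep_grassmann (A $$ (i, j)) else gzero)"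
definition even_mat :: "nat \<Rightarrow> grassmann mat \<Rightarrow> bool" where
  "even_mat m A = (\<forall>i<dim_row A. \<forall>j<dim_col A. parity (pty m i \<noteq> pty m j) (A $$ (i, j)))"

lemma Emat_Lam: "X \<in> Emat m n \<Longrightarrow> X i j \<in> Lam"
  by (cases "i < m + n \<and> j < m + n") (auto simp: Emat_def)

lemma lift_mat_carrier[simp]: "lift_mat m n X \<in> carrier_mat (m + n) (m + n)"
  by (simp add: lift_mat_def)

lemma raw_mat_lift_mat: "X \<in> Emat m n \<Longrightarrow> raw_mat m n (lift_mat m n X) = X"
  by (auto simp: raw_mat_def lift_mat_def Emat_Lam fun_eq_iff) (auto simp: Emat_def)

lemma lift_mat_raw_mat: "A \<in> carrier_mat (m + n) (m + n) \<Longrightarrow> lift_mat m n (raw_mat m n A) = A"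
  by (intro eq_matI) (auto simp: raw_mat_def lift_mat_def Rep_grassmann_inverse)

lemma even_mat_lift_mat: "X \<in> Emat m n \<Longrightarrow> even_mat m (lift_mat m n X)"
  by (auto simp: even_mat_def lift_mat_def parity_def Emat_Lam) (auto simp: Emat_def)

lemma raw_mat_Emat: "A \<in> carrier_mat (m + n) (m + n) \<Longrightarrow> even_mat m A \<Longrightarrow> raw_mat m n A \<in> Emat m n"
  by (auto simp: Emat_def raw_mat_def even_mat_def parity_def)

lemma mmul_raw_mat:
  assumes "A \<in> carrier_mat (m + n) (m + n)" "B \<in> carrier_mat (m + n) (m + n)"
  shows "mmul m n (raw_mat m n A) (raw_mat m n B) = raw_mat m n (A * B)"
proof (rule ext, rule ext)
  fix i j show "mmul m n (raw_mat m n A) (raw_mat m n B) i j = raw_mat m n (A * B) i j"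
  proof (cases "i < m + n \<and> j < m + n")
    case True
    have "mmul m n (raw_mat m n A) (raw_mat m n B) i j = gsum (\<lambda>k. Rep_grassmann (A $$ (i, k) * B $$ (k, j))) {..<m + n}"
      unfolding mmul_def using True by (auto simp: raw_mat_def intro: gsum_cong)
    also have "\<dots> = Rep_grassmann (\<Sum>k<m + n. A $$ (i, k) * B $$ (k, j))" by (rule gsum_Rep)
    also have "\<dots> = raw_mat m n (A * B) i j"
      using True assms by (simp add: raw_mat_def scalar_prod_def atLeast0LessThan)
    finally show ?thesis .
  qed (auto simp: mmul_def raw_mat_def)
qed

lemma mone_raw_mat: "mone m n = raw_mat m n (1\<^sub>m (m + n))"
  by (auto simp: mone_def raw_mat_def fun_eq_iff gzero_def)

lemma even_mat_one: "even_mat m (1\<^sub>m k)"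
  by (auto simp: even_mat_def)

lemma parity_cong: "parity p a \<Longrightarrow> p = q \<Longrightarrow> parity q a" by simp

lemma even_mat_mult:
  assumes "A \<in> carrier_mat k k" "B \<in> carrier_mat k k" "even_mat m A" "even_mat m B"
  shows "even_mat m (A * B)"
  unfolding even_mat_def
proof (intro allI impI)
  fix i j assume ij: "i < dim_row (A * B)" "j < dim_col (A * B)"
  have "(A * B) $$ (i, j) = (\<Sum>l\<in>{0..<k}. A $$ (i, l) * B $$ (l, j))"
    using ij assms by (simp add: scalar_prod_def)
  moreover have "parity (pty m i \<noteq> pty m j) (\<Sum>l\<in>{0..<k}. A $$ (i, l) * B $$ (l, j))"
  proof (rule parity_sum)
    fix l assume "l \<in> {0..<k}"
    then have "parity ((pty m i \<noteq> pty m l) \<noteq> (pty m l \<noteq> pty m j)) (A $$ (i, l) * B $$ (l, j))"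
      using assms ij by (intro parity_mult) (auto simp: even_mat_def)
    then show "parity (pty m i \<noteq> pty m j) (A $$ (i, l) * B $$ (l, j))" by (rule parity_cong) auto
  qed
  ultimately show "parity (pty m i \<noteq> pty m j) ((A * B) $$ (i, j))" by simp
qed

lemma even_mat_add: "A \<in> carrier_mat k k \<Longrightarrow> B \<in> carrier_mat k k \<Longrightarrow> even_mat m A \<Longrightarrow> even_mat m B \<Longrightarrow> even_mat m (A + B)"
  by (auto simp: even_mat_def intro: parity_add)
lemma even_mat_minus: "A \<in> carrier_mat k k \<Longrightarrow> B \<in> carrier_mat k k \<Longrightarrow> even_mat m A \<Longrightarrow> even_mat m B \<Longrightarrow> even_mat m (A - B)"
  by (auto simp: even_mat_def intro: parity_diff)
lemma even_mat_zero: "even_mat m (0\<^sub>m k k)"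
  by (auto simp: even_mat_def)
lemma even_mat_pow: "A \<in> carrier_mat k k \<Longrightarrow> even_mat m A \<Longrightarrow> even_mat m (A ^\<^sub>m l)"
  by (induction l) (auto intro!: even_mat_mult[of _ k] simp: even_mat_one)

lemma dim_lift_mat[simp]: "dim_row (lift_mat m n X) = m + n" "dim_col (lift_mat m n X) = m + n"
  by (simp_all add: lift_mat_def)

lemma mult_carrier_sq[simp]: "A \<in> carrier_mat k k \<Longrightarrow> B \<in> carrier_mat k k \<Longrightarrow> A * B \<in> carrier_mat k k"
  by (rule mult_carrier_mat)

lemma Emat_raw_mat_lift_mat: "X \<in> Emat m n \<Longrightarrow> X = raw_mat m n (lift_mat m n X)"
  by (simp add: raw_mat_lift_mat)

lemma mone_Emat: "mone m n \<in> Emat m n"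
  unfolding mone_raw_mat by (rule raw_mat_Emat) (auto simp: even_mat_one)

lemma lift_mat_mone: "lift_mat m n (mone m n) = 1\<^sub>m (m + n)"
  unfolding mone_raw_mat by (simp add: lift_mat_raw_mat)

lemma mmul_lift_mat: "X \<in> Emat m n \<Longrightarrow> Y \<in> Emat m n \<Longrightarrow> mmul m n X Y = raw_mat m n (lift_mat m n X * lift_mat m n Y)"
  by (subst (1 2) Emat_raw_mat_lift_mat, assumption+) (simp add: mmul_raw_mat)

lemma mmul_Emat: "X \<in> Emat m n \<Longrightarrow> Y \<in> Emat m n \<Longrightarrow> mmul m n X Y \<in> Emat m n"
  by (auto simp: mmul_lift_mat intro!: raw_mat_Emat even_mat_mult[of _ "m + n"] even_mat_lift_mat)

lemma lift_mat_mmul: "X \<in> Emat m n \<Longrightarrow> Y \<in> Emat m n \<Longrightarrow> lift_mat m n (mmul m n X Y) = lift_mat m n X * lift_mat m n Y"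
  by (simp add: mmul_lift_mat lift_mat_raw_mat)

lemma mmul_assoc: "X \<in> Emat m n \<Longrightarrow> Y \<in> Emat m n \<Longrightarrow> Z \<in> Emat m n \<Longrightarrow>
  mmul m n (mmul m n X Y) Z = mmul m n X (mmul m n Y Z)"
  using mmul_lift_mat[of "mmul m n X Y" m n Z] mmul_lift_mat[of X m n "mmul m n Y Z"]
    assoc_mult_mat[OF lift_mat_carrier[of m n X] lift_mat_carrier[of m n Y] lift_mat_carrier[of m n Z]]
  by (simp add: mmul_Emat lift_mat_mmul)

lemma mmul_mone_left: "X \<in> Emat m n \<Longrightarrow> mmul m n (mone m n) X = X"
  by (simp add: mmul_lift_mat mone_Emat lift_mat_mone raw_mat_lift_mat)
lemma mmul_mone_right: "X \<in> Emat m n \<Longrightarrow> mmul m n X (mone m n) = X"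
  by (simp add: mmul_lift_mat mone_Emat lift_mat_mone raw_mat_lift_mat)

section \<open>Koszul signs and coefficients of the tensor action\<close>

lemma finite_Idx[simp]: "finite (Idx m n r)"
proof -
  have "Idx m n r \<subseteq> {xs. set xs \<subseteq> {..<m + n} \<and> length xs = r}" by (auto simp: Idx_def)
  then show ?thesis by (rule finite_subset) (rule finite_lists_length_eq, simp)
qed

lemma Idx_0[simp]: "Idx m n 0 = {[]}" by (auto simp: Idx_def)

lemma Idx_Suc: "Idx m n (Suc r) = (\<lambda>(k, K). k # K) ` ({..<m + n} \<times> Idx m n r)"
proof
  show "Idx m n (Suc r) \<subseteq> (\<lambda>(k, K). k # K) ` ({..<m + n} \<times> Idx m n r)"
  proof
    fix J assume "J \<in> Idx m n (Suc r)"
    then obtain k K where "J = k # K" "k < m + n" "K \<in> Idx m n r"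
      by (cases J) (auto simp: Idx_def)
    then show "J \<in> (\<lambda>(k, K). k # K) ` ({..<m + n} \<times> Idx m n r)" by force
  qed
qed (auto simp: Idx_def)

lemma sum_Idx_Suc:
  "(\<Sum>K\<in>Idx m n (Suc r). f K) = (\<Sum>k<m + n. \<Sum>K\<in>Idx m n r. f (k # K))"
proof -
  have "(\<Sum>K\<in>Idx m n (Suc r). f K) = (\<Sum>p\<in>{..<m + n} \<times> Idx m n r. f (case p of (k, K) \<Rightarrow> k # K))"
    unfolding Idx_Suc by (subst sum.reindex) (auto simp: inj_on_def)
  also have "\<dots> = (\<Sum>k<m + n. \<Sum>K\<in>Idx m n r. f (k # K))"
    by (subst sum.cartesian_product) (rule sum.cong, auto)
  finally show ?thesis .
qed

definition odd_count :: "nat \<Rightarrow> nat list \<Rightarrow> nat \<Rightarrow> nat" where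
  "odd_count m J r = card {b. b < r \<and> pty m (J ! b)}"

lemma odd_count_0[simp]: "odd_count m J 0 = 0" by (simp add: odd_count_def)

lemma odd_count_Cons: "odd_count m (j # J) (Suc r) = (if pty m j then 1 else 0) + odd_count m J r"
proof -
  have e: "{b. b < Suc r \<and> pty m ((j # J) ! b)} = (if pty m j then {0} else {}) \<union> Suc ` {b. b < r \<and> pty m (J ! b)}"
    by (auto simp: less_Suc_eq_0_disj)
  show ?thesis unfolding odd_count_def e
    by (subst card_Un_disjoint) (auto simp: card_image)
qed

lemma tsign_0[simp]: "tsign m 0 J I = 1" by (simp add: tsign_def)

lemma tsign_Cons:
  "tsign m (Suc r) (j # J) (i # I) =
    (if pty m j \<noteq> pty m i \<and> odd (odd_count m J r) then -1 else 1) * tsign m r J I"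
proof -
  let ?S = "{(a, b). a < b \<and> b < r \<and> (pty m (J ! a) \<noteq> pty m (I ! a)) \<and> pty m (J ! b)}"
  let ?B = "{b. b < r \<and> pty m (J ! b)}"
  have e: "{(a, b). a < b \<and> b < Suc r \<and> (pty m ((j # J) ! a) \<noteq> pty m ((i # I) ! a)) \<and> pty m ((j # J) ! b)}
    = (if pty m j \<noteq> pty m i then (\<lambda>b. (0, Suc b)) ` ?B else {}) \<union> (\<lambda>(a, b). (Suc a, Suc b)) ` ?S"
    (is "?L = ?R")
  proof
    show "?L \<subseteq> ?R"
    proof
      fix p assume "p \<in> ?L"
      then obtain a b where p: "p = (a, b)" "a < b" "b < Suc r" "pty m ((j # J) ! a) \<noteq> pty m ((i # I) ! a)"
        "pty m ((j # J) ! b)" by auto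
      then obtain b' where b': "b = Suc b'" by (cases b) auto
      show "p \<in> ?R"
      proof (cases a)
        case 0 then show ?thesis using p b' by auto
      next
        case (Suc a') then show ?thesis using p b' by (auto intro!: image_eqI[of _ _ "(a', b')"])
      qed
    qed
    show "?R \<subseteq> ?L" by (auto split: if_splits)
  qed
  have fS: "finite ?S" by (rule finite_subset[of _ "{..<r} \<times> {..<r}"]) auto
  have fB: "finite ?B" by (rule finite_subset[of _ "{..<r}"]) auto
  let ?A0 = "(if pty m j \<noteq> pty m i then (\<lambda>b. (0::nat, Suc b)) ` ?B else {})"
  let ?A1 = "(\<lambda>(a, b). (Suc a, Suc b)) ` ?S"
  have c0: "card ?A0 = (if pty m j \<noteq> pty m i then odd_count m J r else 0)"
    by (auto simp: card_image inj_on_def odd_count_def)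
  have c1: "card ?A1 = card ?S"
    by (rule card_image) (auto simp: inj_on_def)
  have "card (?A0 \<union> ?A1) = card ?A0 + card ?A1"
    using fS fB by (intro card_Un_disjoint) auto
  then have c: "card ?L = (if pty m j \<noteq> pty m i then odd_count m J r else 0) + card ?S"
    unfolding e c0 c1 .
  show ?thesis unfolding tsign_def c by (auto simp: power_add)
qed

definition action_coeff :: "nat \<Rightarrow> nat \<Rightarrow> grassmann mat \<Rightarrow> nat list \<Rightarrow> nat list \<Rightarrow> grassmann" where
  "action_coeff m r A J I = scalar (tsign m r J I) * prod_list (map (\<lambda>a. A $$ (J ! a, I ! a)) [0..<r])"

lemma map_upt_Suc_Cons: "map (\<lambda>a. f ((j # J) ! a) ((i # I) ! a)) [0..<Suc r] = f j i # map (\<lambda>a. f (J ! a) (I ! a)) [0..<r]"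
  by (simp add: upt_conv_Cons map_Suc_upt[symmetric] del: upt_Suc)

lemma action_coeff_0[simp]: "action_coeff m 0 A J I = 1" by (simp add: action_coeff_def)

lemma action_coeff_Cons:
  "action_coeff m (Suc r) A (j # J) (i # I) =
    scalar (if pty m j \<noteq> pty m i \<and> odd (odd_count m J r) then -1 else 1) * (A $$ (j, i) * action_coeff m r A J I)"
  unfolding action_coeff_def tsign_Cons scalar_mult map_upt_Suc_Cons[of "\<lambda>x y. A $$ (x, y)"]
  by (simp only: prod_list.Cons mult.assoc scalar_left_comm[of "A $$ (j, i)"])

lemma parity_action_coeff:
  assumes "A \<in> carrier_mat (m + n) (m + n)" "even_mat m A"
  shows "J \<in> Idx m n r \<Longrightarrow> I \<in> Idx m n r \<Longrightarrow> parity (odd (odd_count m J r) \<noteq> odd (odd_count m I r)) (action_coeff m r A J I)"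
proof (induction r arbitrary: J I)
  case 0 then show ?case by simp
next
  case (Suc r)
  obtain j J' where J: "J = j # J'" "j < m + n" "J' \<in> Idx m n r" using Suc.prems(1) unfolding Idx_Suc by auto
  obtain i I' where I: "I = i # I'" "i < m + n" "I' \<in> Idx m n r" using Suc.prems(2) unfolding Idx_Suc by auto
  have pA: "parity (pty m j \<noteq> pty m i) (A $$ (j, i))" using assms J I by (auto simp: even_mat_def)
  have "parity ((pty m j \<noteq> pty m i) \<noteq> (odd (odd_count m J' r) \<noteq> odd (odd_count m I' r))) (A $$ (j, i) * action_coeff m r A J' I')"
    by (rule parity_mult[OF pA Suc.IH[OF J(3) I(3)]])
  then have "parity ((pty m j \<noteq> pty m i) \<noteq> (odd (odd_count m J' r) \<noteq> odd (odd_count m I' r))) (action_coeff m (Suc r) A J I)"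
    unfolding J(1) I(1) action_coeff_Cons by (rule parity_scalar_mult)
  then show ?case unfolding J(1) I(1) odd_count_Cons by (rule parity_cong) auto
qed

text \<open>Moving B k i past the A-coefficient costs a supercommutativity sign, and it is exactly
  this sign that turns the two Koszul signs into the one of the product.\<close>

lemma action_coeff_Cons_mult:
  assumes A: "A \<in> carrier_mat (m + n) (m + n)" "even_mat m A"
    and B: "B \<in> carrier_mat (m + n) (m + n)" "even_mat m B"
    and J': "J' \<in> Idx m n r" and K': "K' \<in> Idx m n r" and k: "k < m + n" and i: "i < m + n"
  shows "action_coeff m (Suc r) A (j # J') (k # K') * action_coeff m (Suc r) B (k # K') (i # I')
    = scalar (if pty m j \<noteq> pty m i \<and> odd (odd_count m J' r) then -1 else 1)
      * ((A $$ (j, k) * B $$ (k, i)) * (action_coeff m r A J' K' * action_coeff m r B K' I'))"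
proof -
  define s where "s = (if pty m j \<noteq> pty m i \<and> odd (odd_count m J' r) then -1 else (1::complex))"
  define sa where "sa = (if pty m j \<noteq> pty m k \<and> odd (odd_count m J' r) then -1 else (1::complex))"
  define sb where "sb = (if pty m k \<noteq> pty m i \<and> odd (odd_count m K' r) then -1 else (1::complex))"
  define sw where "sw = (if (pty m k \<noteq> pty m i) \<and> (odd (odd_count m J' r) \<noteq> odd (odd_count m K' r))
    then -1 else (1::complex))"
  have pB: "parity (pty m k \<noteq> pty m i) (B $$ (k, i))" using B k i by (auto simp: even_mat_def)
  have pC: "parity (odd (odd_count m J' r) \<noteq> odd (odd_count m K' r)) (action_coeff m r A J' K')"
    by (rule parity_action_coeff[OF A J' K'])
  have swap: "action_coeff m r A J' K' * B $$ (k, i) = scalar sw * (B $$ (k, i) * action_coeff m r A J' K')"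
    unfolding sw_def using supercomm[OF pC pB] by (simp add: conj_commute)
  have sgn: "sa * sb * sw = s"
    unfolding sa_def sb_def sw_def s_def by auto
  have "action_coeff m (Suc r) A (j # J') (k # K') * action_coeff m (Suc r) B (k # K') (i # I')
    = scalar sa * (A $$ (j, k) * action_coeff m r A J' K') * (scalar sb * (B $$ (k, i) * action_coeff m r B K' I'))"
    unfolding action_coeff_Cons sa_def sb_def ..
  also have "\<dots> = scalar sa * scalar sb * (A $$ (j, k) * (action_coeff m r A J' K' * B $$ (k, i))
      * action_coeff m r B K' I')"
    by (simp only: mult.assoc scalar_left_comm[of "action_coeff m r A J' K'"] scalar_left_comm[of "A $$ (j, k)"])
  also have "\<dots> = scalar sa * scalar sb * scalar sw * (A $$ (j, k) * B $$ (k, i) * action_coeff m r A J' K'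
      * action_coeff m r B K' I')"
    unfolding swap by (simp only: scalar_left_comm[of "A $$ (j, k)"] mult.assoc)
  also have "\<dots> = scalar s * ((A $$ (j, k) * B $$ (k, i)) * (action_coeff m r A J' K' * action_coeff m r B K' I'))"
    unfolding sgn[symmetric] scalar_mult by (simp add: mult.assoc)
  finally show ?thesis unfolding s_def .
qed

lemma action_coeff_comp:
  assumes A: "A \<in> carrier_mat (m + n) (m + n)" "even_mat m A"
    and B: "B \<in> carrier_mat (m + n) (m + n)" "even_mat m B"
  shows "J \<in> Idx m n r \<Longrightarrow> I \<in> Idx m n r \<Longrightarrow>
    (\<Sum>K\<in>Idx m n r. action_coeff m r A J K * action_coeff m r B K I) = action_coeff m r (A * B) J I"
proof (induction r arbitrary: J I)
  case 0 then show ?case by simp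
next
  case (Suc r)
  obtain j J' where J: "J = j # J'" "j < m + n" "J' \<in> Idx m n r" using Suc.prems(1) unfolding Idx_Suc by auto
  obtain i I' where I: "I = i # I'" "i < m + n" "I' \<in> Idx m n r" using Suc.prems(2) unfolding Idx_Suc by auto
  define s where "s = (if pty m j \<noteq> pty m i \<and> odd (odd_count m J' r) then -1 else (1::complex))"
  have "(\<Sum>K\<in>Idx m n (Suc r). action_coeff m (Suc r) A J K * action_coeff m (Suc r) B K I)
      = (\<Sum>k<m + n. \<Sum>K'\<in>Idx m n r. scalar s * ((A $$ (j, k) * B $$ (k, i))
          * (action_coeff m r A J' K' * action_coeff m r B K' I')))"
    unfolding sum_Idx_Suc J(1) I(1) s_def
    by (intro sum.cong refl) (simp add: action_coeff_Cons_mult[OF A B J(3) _ _ I(2)])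
  also have "\<dots> = scalar s * ((\<Sum>k<m + n. A $$ (j, k) * B $$ (k, i))
      * (\<Sum>K'\<in>Idx m n r. action_coeff m r A J' K' * action_coeff m r B K' I'))"
    by (subst sum_product) (simp only: sum_distrib_left)
  also have "\<dots> = scalar s * ((A * B) $$ (j, i) * action_coeff m r (A * B) J' I')"
    using Suc.IH[OF J(3) I(3)] A B J I by (simp add: scalar_prod_def atLeast0LessThan)
  also have "\<dots> = action_coeff m (Suc r) (A * B) J I"
    unfolding J(1) I(1) action_coeff_Cons s_def ..
  finally show ?case .
qed

lemma action_coeff_one:
  "J \<in> Idx m n r \<Longrightarrow> I \<in> Idx m n r \<Longrightarrow> action_coeff m r (1\<^sub>m (m + n)) J I = (if J = I then 1 else 0)"
proof (induction r arbitrary: J I)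
  case 0 then show ?case by simp
next
  case (Suc r)
  obtain j J' where J: "J = j # J'" "j < m + n" "J' \<in> Idx m n r" using Suc.prems(1) unfolding Idx_Suc by auto
  obtain i I' where I: "I = i # I'" "i < m + n" "I' \<in> Idx m n r" using Suc.prems(2) unfolding Idx_Suc by auto
  show ?case unfolding J(1) I(1) action_coeff_Cons using J I Suc.IH[OF J(3) I(3)] by auto
qed


definition raw_tensor :: "nat \<Rightarrow> nat \<Rightarrow> nat \<Rightarrow> (nat list \<Rightarrow> grassmann) \<Rightarrow> tvec" where
  "raw_tensor m n r v = (\<lambda>I. if I \<in> Idx m n r then Rep_grassmann (v I) else gzero)"
definition lift_tensor :: "tvec \<Rightarrow> nat list \<Rightarrow> grassmann" where
  "lift_tensor w = (\<lambda>I. Abs_grassmann (w I))"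
definition tensor_action :: "nat \<Rightarrow> nat \<Rightarrow> nat \<Rightarrow> grassmann mat \<Rightarrow> (nat list \<Rightarrow> grassmann) \<Rightarrow> nat list \<Rightarrow> grassmann" where
  "tensor_action m n r A v = (\<lambda>J. \<Sum>I\<in>Idx m n r. action_coeff m r A J I * v I)"

lemma TrV_Lam: "w \<in> TrV m n r \<Longrightarrow> w I \<in> Lam"
  by (cases "I \<in> Idx m n r") (auto simp: TrV_def)

lemma raw_tensor_lift_tensor: "w \<in> TrV m n r \<Longrightarrow> raw_tensor m n r (lift_tensor w) = w"
  by (auto simp: raw_tensor_def lift_tensor_def TrV_Lam fun_eq_iff) (auto simp: TrV_def)

lemma raw_tensor_TrV[simp]: "raw_tensor m n r v \<in> TrV m n r"
  by (auto simp: raw_tensor_def TrV_def)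

lemma raw_tensor_eq: "(\<And>I. I \<in> Idx m n r \<Longrightarrow> v I = v' I) \<Longrightarrow> raw_tensor m n r v = raw_tensor m n r v'"
  by (auto simp: raw_tensor_def fun_eq_iff)

lemma Idx_nth_less: "I \<in> Idx m n r \<Longrightarrow> a < r \<Longrightarrow> I ! a < m + n"
  by (auto simp: Idx_def) (meson lessThan_iff nth_mem subsetD)

lemma Idx_length: "I \<in> Idx m n r \<Longrightarrow> length I = r"
  by (auto simp: Idx_def)

lemma tact_raw_mat:
  assumes A: "A \<in> carrier_mat (m + n) (m + n)"
  shows "tact m n r (raw_mat m n A) (raw_tensor m n r v) = raw_tensor m n r (tensor_action m n r A v)"
proof
  fix J show "tact m n r (raw_mat m n A) (raw_tensor m n r v) J = raw_tensor m n r (tensor_action m n r A v) J"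
  proof (cases "J \<in> Idx m n r")
    case J: True
    have key: "gscale (tsign m r J I) (gmul (gprod (map (\<lambda>a. raw_mat m n A (J ! a) (I ! a)) [0..<r])) (raw_tensor m n r v I))
         = Rep_grassmann (action_coeff m r A J I * v I)" if I: "I \<in> Idx m n r" for I
    proof -
      have mapeq: "map (\<lambda>a. raw_mat m n A (J ! a) (I ! a)) [0..<r] = map Rep_grassmann (map (\<lambda>a. A $$ (J ! a, I ! a)) [0..<r])"
        using I J by (auto simp: raw_mat_def Idx_nth_less)
      have gp: "gprod (map (\<lambda>a. raw_mat m n A (J ! a) (I ! a)) [0..<r])
          = Rep_grassmann (prod_list (map (\<lambda>a. A $$ (J ! a, I ! a)) [0..<r]))"
        by (simp only: mapeq Rep_prod_list)
      have ov: "raw_tensor m n r v I = Rep_grassmann (v I)" using I by (simp add: raw_tensor_def)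
      show ?thesis
        unfolding gp ov action_coeff_def mult.assoc by (simp only: Rep_times[symmetric] gscale_Rep)
    qed
    have "tact m n r (raw_mat m n A) (raw_tensor m n r v) J =
      gsum (\<lambda>I. Rep_grassmann (action_coeff m r A J I * v I)) (Idx m n r)"
      unfolding tact_def if_P[OF J] by (rule gsum_cong) (rule key)
    also have "\<dots> = Rep_grassmann (tensor_action m n r A v J)" unfolding tensor_action_def by (rule gsum_Rep)
    finally show ?thesis using J by (simp add: raw_tensor_def)
  qed (simp add: tact_def raw_tensor_def)
qed

lemma tensor_action_comp:
  assumes "A \<in> carrier_mat (m + n) (m + n)" "even_mat m A" "B \<in> carrier_mat (m + n) (m + n)" "even_mat m B"
    and J: "J \<in> Idx m n r"
  shows "tensor_action m n r A (tensor_action m n r B v) J = tensor_action m n r (A * B) v J"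
proof -
  have "tensor_action m n r A (tensor_action m n r B v) J =
      (\<Sum>K\<in>Idx m n r. \<Sum>I\<in>Idx m n r. action_coeff m r A J K * action_coeff m r B K I * v I)"
    by (simp add: tensor_action_def sum_distrib_left mult.assoc)
  also have "\<dots> = (\<Sum>I\<in>Idx m n r. (\<Sum>K\<in>Idx m n r. action_coeff m r A J K * action_coeff m r B K I) * v I)"
    by (subst sum.swap) (simp add: sum_distrib_right)
  also have "\<dots> = tensor_action m n r (A * B) v J"
    unfolding tensor_action_def by (intro sum.cong refl) (simp add: action_coeff_comp[OF assms(1-4) J])
  finally show ?thesis .
qed

lemma tensor_action_one:
  assumes J: "J \<in> Idx m n r" shows "tensor_action m n r (1\<^sub>m (m + n)) v J = v J"
proof -
  have "tensor_action m n r (1\<^sub>m (m + n)) v J = (\<Sum>I\<in>Idx m n r. if J = I then v I else 0)"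
    unfolding tensor_action_def by (rule sum.cong) (auto simp: action_coeff_one J)
  also have "\<dots> = v J" using J by (simp add: sum.delta)
  finally show ?thesis .
qed

lemma TrV_raw_tensor_lift_tensor: "w \<in> TrV m n r \<Longrightarrow> w = raw_tensor m n r (lift_tensor w)"
  by (simp add: raw_tensor_lift_tensor)

lemma tact_TrV: "X \<in> Emat m n \<Longrightarrow> w \<in> TrV m n r \<Longrightarrow> tact m n r X w \<in> TrV m n r"
  by (subst Emat_raw_mat_lift_mat, assumption, subst TrV_raw_tensor_lift_tensor, assumption, simp add: tact_raw_mat)

lemma tact_lift_mat: "X \<in> Emat m n \<Longrightarrow> w \<in> TrV m n r \<Longrightarrow>
   tact m n r X w = raw_tensor m n r (tensor_action m n r (lift_mat m n X) (lift_tensor w))"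
  by (subst Emat_raw_mat_lift_mat, assumption, subst TrV_raw_tensor_lift_tensor, assumption, simp add: tact_raw_mat)

lemma tact_mone: assumes "w \<in> TrV m n r" shows "tact m n r (mone m n) w = w"
proof -
  have "tact m n r (mone m n) w = raw_tensor m n r (tensor_action m n r (1\<^sub>m (m + n)) (lift_tensor w))"
    using assms by (simp add: tact_lift_mat mone_Emat lift_mat_mone)
  also have "\<dots> = raw_tensor m n r (lift_tensor w)" by (rule raw_tensor_eq) (simp add: tensor_action_one)
  also have "\<dots> = w" using assms by (simp add: raw_tensor_lift_tensor)
  finally show ?thesis .
qed

lemma tact_comp:
  assumes X: "X \<in> Emat m n" and Y: "Y \<in> Emat m n" and w: "w \<in> TrV m n r"
  shows "tact m n r X (tact m n r Y w) = tact m n r (mmul m n X Y) w"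
proof -
  define u where "u = tensor_action m n r (lift_mat m n Y) (lift_tensor w)"
  have "tact m n r X (tact m n r Y w) = tact m n r (raw_mat m n (lift_mat m n X)) (raw_tensor m n r u)"
    using X Y w by (simp add: tact_lift_mat u_def raw_mat_lift_mat)
  also have "\<dots> = raw_tensor m n r (tensor_action m n r (lift_mat m n X) u)" by (simp add: tact_raw_mat)
  also have "\<dots> = raw_tensor m n r (tensor_action m n r (lift_mat m n X * lift_mat m n Y) (lift_tensor w))"
    unfolding u_def by (rule raw_tensor_eq, rule tensor_action_comp) (auto simp: even_mat_lift_mat X Y)
  also have "\<dots> = tact m n r (mmul m n X Y) w"
    using X Y w by (simp add: tact_lift_mat mmul_Emat lift_mat_mmul)
  finally show ?thesis .
qed

lemma GLV_ginv:
  assumes "g \<in> GLV m n"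
  shows "ginv m n g \<in> Emat m n" "mmul m n g (ginv m n g) = mone m n" "mmul m n (ginv m n g) g = mone m n"
proof -
  have "\<exists>h. h \<in> Emat m n \<and> mmul m n g h = mone m n \<and> mmul m n h g = mone m n"
    using assms by (auto simp: GLV_def)
  then have "ginv m n g \<in> Emat m n \<and> mmul m n g (ginv m n g) = mone m n \<and> mmul m n (ginv m n g) g = mone m n"
    unfolding ginv_def by (rule someI_ex)
  then show "ginv m n g \<in> Emat m n" "mmul m n g (ginv m n g) = mone m n" "mmul m n (ginv m n g) g = mone m n"
    by auto
qed

lemma GLV_Emat: "g \<in> GLV m n \<Longrightarrow> g \<in> Emat m n" by (simp add: GLV_def)

lemma ginv_GLV: "g \<in> GLV m n \<Longrightarrow> ginv m n g \<in> GLV m n"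
  using GLV_ginv[of g m n] GLV_Emat[of g m n] unfolding GLV_def by blast

lemma inverse_unique:
  assumes "g \<in> Emat m n" "h \<in> Emat m n" "h' \<in> Emat m n"
    "mmul m n g h = mone m n" "mmul m n h' g = mone m n"
  shows "h = h'"
proof -
  have "h = mmul m n (mmul m n h' g) h" using assms by (simp add: mmul_mone_left)
  also have "\<dots> = mmul m n h' (mmul m n g h)" by (rule mmul_assoc) (use assms in auto)
  also have "\<dots> = h'" using assms by (simp add: mmul_mone_right)
  finally show ?thesis .
qed

lemma ginv_ginv: "g \<in> GLV m n \<Longrightarrow> ginv m n (ginv m n g) = g"
  using inverse_unique[of "ginv m n g" m n "ginv m n (ginv m n g)" g]
    GLV_ginv[of g] GLV_ginv[OF ginv_GLV, of g] GLV_Emat[of g] by auto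


definition dual_app :: "nat \<Rightarrow> nat \<Rightarrow> nat \<Rightarrow> tdual \<Rightarrow> (nat list \<Rightarrow> grassmann) \<Rightarrow> grassmann" where
  "dual_app m n r L v = Abs_grassmann (L (raw_tensor m n r v))"

definition unit_tensor :: "nat list \<Rightarrow> nat list \<Rightarrow> grassmann" where
  "unit_tensor J = (\<lambda>K. if K = J then 1 else 0)"

lemma TrVd_Lam: "L \<in> TrVd m n r \<Longrightarrow> w \<in> TrV m n r \<Longrightarrow> L w \<in> Lam"
  by (auto simp: TrVd_def)

lemma Rep_dual_app: "L \<in> TrVd m n r \<Longrightarrow> Rep_grassmann (dual_app m n r L v) = L (raw_tensor m n r v)"
  by (simp add: dual_app_def TrVd_Lam)

lemma tadd_TrV: "w \<in> TrV m n r \<Longrightarrow> w' \<in> TrV m n r \<Longrightarrow> tadd w w' \<in> TrV m n r"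
  unfolding TrV_def tadd_def by (auto simp: Lam_gadd) (auto simp: gadd_def gzero_def)

lemma trmul_TrV: "w \<in> TrV m n r \<Longrightarrow> c \<in> Lam \<Longrightarrow> trmul w c \<in> TrV m n r"
  by (auto simp: TrV_def trmul_def gmul_gzero_left)

lemma dual_app_add:
  assumes L: "L \<in> TrVd m n r"
  shows "dual_app m n r L (\<lambda>I. v I + v' I) = dual_app m n r L v + dual_app m n r L v'"
proof -
  have e: "raw_tensor m n r (\<lambda>I. v I + v' I) = tadd (raw_tensor m n r v) (raw_tensor m n r v')"
    by (auto simp: raw_tensor_def tadd_def fun_eq_iff gadd_def gzero_def)
  show ?thesis
    unfolding Rep_grassmann_inject[symmetric] Rep_plus Rep_dual_app[OF L] e using L by (simp add: TrVd_def)
qed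

lemma dual_app_rmul:
  assumes L: "L \<in> TrVd m n r"
  shows "dual_app m n r L (\<lambda>I. v I * c) = dual_app m n r L v * c"
proof -
  have e: "raw_tensor m n r (\<lambda>I. v I * c) = trmul (raw_tensor m n r v) (Rep_grassmann c)"
    by (auto simp: raw_tensor_def trmul_def fun_eq_iff gmul_gzero_left)
  show ?thesis
    unfolding Rep_grassmann_inject[symmetric] Rep_times Rep_dual_app[OF L] e using L by (simp add: TrVd_def)
qed

lemma dual_app_zero:
  assumes L: "L \<in> TrVd m n r"
  shows "dual_app m n r L (\<lambda>I. 0) = 0"
  using dual_app_add[OF L, of "\<lambda>I. 0" "\<lambda>I. 0"] by simp

lemma dual_app_sum:
  assumes L: "L \<in> TrVd m n r" and F: "finite F"
  shows "dual_app m n r L (\<lambda>I. \<Sum>x\<in>F. f x I) = (\<Sum>x\<in>F. dual_app m n r L (f x))"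
  using F
proof (induction F rule: finite_induct)
  case empty then show ?case using dual_app_zero[OF L] by simp
next
  case (insert x F)
  then show ?case using dual_app_add[OF L, of "f x" "\<lambda>I. \<Sum>x\<in>F. f x I"] by simp
qed

lemma dual_app_cong: "(\<And>I. I \<in> Idx m n r \<Longrightarrow> v I = v' I) \<Longrightarrow> dual_app m n r L v = dual_app m n r L v'"
  unfolding dual_app_def by (simp add: raw_tensor_eq[of m n r v v'])

lemma dual_app_expand:
  assumes L: "L \<in> TrVd m n r"
  shows "dual_app m n r L v = (\<Sum>J\<in>Idx m n r. dual_app m n r L (unit_tensor J) * v J)"
proof -
  have "dual_app m n r L v = dual_app m n r L (\<lambda>K. \<Sum>J\<in>Idx m n r. unit_tensor J K * v J)"
  proof (rule dual_app_cong)
    fix I assume I: "I \<in> Idx m n r"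
    have "(\<Sum>J\<in>Idx m n r. unit_tensor J I * v J) = (\<Sum>J\<in>Idx m n r. if I = J then v J else 0)"
      by (rule sum.cong) (auto simp: unit_tensor_def)
    also have "\<dots> = v I" using I by (simp add: sum.delta)
    finally show "v I = (\<Sum>J\<in>Idx m n r. unit_tensor J I * v J)" by simp
  qed
  also have "\<dots> = (\<Sum>J\<in>Idx m n r. dual_app m n r L (\<lambda>K. unit_tensor J K * v J))"
    by (rule dual_app_sum[OF L]) simp
  also have "\<dots> = (\<Sum>J\<in>Idx m n r. dual_app m n r L (unit_tensor J) * v J)"
    by (rule sum.cong) (auto simp: dual_app_rmul[OF L])
  finally show ?thesis .
qed

lemma dual_tact_expansion:
  assumes L: "L \<in> TrVd m n r" and X: "X \<in> Emat m n" and w: "w \<in> TrV m n r"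
  shows "L (tact m n r X w) = Rep_grassmann (\<Sum>J\<in>Idx m n r. \<Sum>I\<in>Idx m n r.
            dual_app m n r L (unit_tensor J) * action_coeff m r (lift_mat m n X) J I * lift_tensor w I)"
proof -
  have "L (tact m n r X w) = Rep_grassmann (dual_app m n r L (tensor_action m n r (lift_mat m n X) (lift_tensor w)))"
    using X w by (simp add: tact_lift_mat Rep_dual_app[OF L])
  also have "dual_app m n r L (tensor_action m n r (lift_mat m n X) (lift_tensor w)) =
     (\<Sum>J\<in>Idx m n r. \<Sum>I\<in>Idx m n r. dual_app m n r L (unit_tensor J) * action_coeff m r (lift_mat m n X) J I * lift_tensor w I)"
    by (subst dual_app_expand[OF L]) (simp add: tensor_action_def sum_distrib_left mult.assoc)
  finally show ?thesis .
qed

section \<open>\<Psi> takes values in polynomial functions\<close>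

definition monomial_coeff :: "nat \<Rightarrow> nat \<Rightarrow> nat \<Rightarrow> tdual \<Rightarrow> nat list \<Rightarrow> nat list \<Rightarrow> grass" where
  "monomial_coeff m n r L J I = gscale (tsign m r J I) (L (raw_tensor m n r (unit_tensor J)))"

definition monomial_fun :: "nat \<Rightarrow> nat \<Rightarrow> nat \<Rightarrow> tdual \<Rightarrow> nat list \<Rightarrow> nat list \<Rightarrow> Defs.mat \<Rightarrow> grass" where
  "monomial_fun m n r L J I = (\<lambda>X. if X \<in> Emat m n then
      glsum (map (\<lambda>(c, ks). gmul c (gprod (map (\<lambda>(i, j). X i j) ks))) [(monomial_coeff m n r L J I, zip J I)])
    else gzero)"

definition coord_functional :: "nat \<Rightarrow> nat \<Rightarrow> nat \<Rightarrow> nat list \<Rightarrow> tdual" where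
  "coord_functional m n r I = (\<lambda>w. if w \<in> TrV m n r then w I else gzero)"

lemma coord_functional_TrVd: "coord_functional m n r I \<in> TrVd m n r"
  unfolding TrVd_def coord_functional_def
  by (auto simp: TrV_Lam tadd_TrV trmul_TrV) (auto simp: tadd_def trmul_def)

lemma monomial_fun_Pr:
  assumes L: "L \<in> TrVd m n r" and J: "J \<in> Idx m n r" and I: "I \<in> Idx m n r"
  shows "monomial_fun m n r L J I \<in> Pr m n r"
  unfolding Pr_def
proof (intro CollectI conjI allI impI exI[of _ "[(monomial_coeff m n r L J I, zip J I)]"])
  show "\<And>X. X \<notin> Emat m n \<Longrightarrow> monomial_fun m n r L J I X = gzero" by (simp add: monomial_fun_def)
  show "\<forall>X\<in>Emat m n. monomial_fun m n r L J I X =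
      glsum (map (\<lambda>(c, ks). gmul c (gprod (map (\<lambda>(i, j). X i j) ks))) [(monomial_coeff m n r L J I, zip J I)])"
    by (simp add: monomial_fun_def)
  have "L (raw_tensor m n r (unit_tensor J)) \<in> Lam" using L by (simp add: TrVd_Lam)
  then show "\<forall>(c, ks)\<in>set [(monomial_coeff m n r L J I, zip J I)]. c \<in> Lam
      \<and> length ks = r \<and> (\<forall>(i, j)\<in>set ks. i < m + n \<and> j < m + n)"
    using J I by (auto simp: monomial_coeff_def Idx_def dest: set_zip_leftD set_zip_rightD)
qed

lemma zip_map_nth: "length J = r \<Longrightarrow> length I = r \<Longrightarrow>
   map (\<lambda>(i, j). f i j) (zip J I) = map (\<lambda>a. f (J ! a) (I ! a)) [0..<r]"
  by (rule nth_equalityI) auto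

lemma lift_mat_entry: "X \<in> Emat m n \<Longrightarrow> i < m + n \<Longrightarrow> j < m + n \<Longrightarrow> Rep_grassmann (lift_mat m n X $$ (i, j)) = X i j"
  by (simp add: lift_mat_def Emat_Lam)

lemma lift_tensor_entry: "w \<in> TrV m n r \<Longrightarrow> Rep_grassmann (lift_tensor w I) = w I"
  by (simp add: lift_tensor_def TrV_Lam)

lemma monomial_fun_term:
  assumes L: "L \<in> TrVd m n r" and X: "X \<in> Emat m n" and w: "w \<in> TrV m n r"
    and J: "J \<in> Idx m n r" and I: "I \<in> Idx m n r"
  shows "gmul (monomial_fun m n r L J I X) (coord_functional m n r I w) =
    Rep_grassmann (dual_app m n r L (unit_tensor J) * action_coeff m r (lift_mat m n X) J I * lift_tensor w I)"
proof -
  have m1: "map (\<lambda>(i, j). X i j) (zip J I) = map Rep_grassmann (map (\<lambda>a. lift_mat m n X $$ (J ! a, I ! a)) [0..<r])"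
    using J I X by (simp add: zip_map_nth Idx_length lift_mat_entry Idx_nth_less)
  have c: "monomial_coeff m n r L J I = Rep_grassmann (scalar (tsign m r J I) * dual_app m n r L (unit_tensor J))"
    unfolding monomial_coeff_def Rep_dual_app[OF L, symmetric] gscale_Rep ..
  have "monomial_fun m n r L J I X = gmul (monomial_coeff m n r L J I) (gprod (map (\<lambda>(i, j). X i j) (zip J I)))"
    using X by (simp add: monomial_fun_def glsum_def gadd_def gzero_def)
  also have "\<dots> = Rep_grassmann (scalar (tsign m r J I) * dual_app m n r L (unit_tensor J)
      * prod_list (map (\<lambda>a. lift_mat m n X $$ (J ! a, I ! a)) [0..<r]))"
    unfolding m1 c Rep_prod_list[symmetric] Rep_times ..
  finally have f: "monomial_fun m n r L J I X = \<dots>" .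
  have lp: "coord_functional m n r I w = Rep_grassmann (lift_tensor w I)"
    using w by (simp add: coord_functional_def lift_tensor_entry)
  have "scalar (tsign m r J I) * dual_app m n r L (unit_tensor J) * prod_list (map (\<lambda>a. lift_mat m n X $$ (J ! a, I ! a)) [0..<r])
      * lift_tensor w I
     = dual_app m n r L (unit_tensor J) * action_coeff m r (lift_mat m n X) J I * lift_tensor w I"
    unfolding action_coeff_def by (simp only: mult.assoc scalar_left_comm[of "dual_app m n r L (unit_tensor J)"])
  then show ?thesis unfolding f lp Rep_times[symmetric] by simp
qed

lemma glsum_Rep_map: "glsum (map (\<lambda>p. Rep_grassmann (g p)) xs) = Rep_grassmann (sum_list (map g xs))"
  by (simp add: Rep_sum_list o_def)

lemma Psi_PT:
  assumes L: "L \<in> TrVd m n r"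
  shows "Psi m n r L \<in> PT m n r"
proof -
  obtain pairs where pairs: "set pairs = Idx m n r \<times> Idx m n r" "distinct pairs"
    using finite_distinct_list[of "Idx m n r \<times> Idx m n r"] by auto
  define ps where "ps = map (\<lambda>(J, I). (monomial_fun m n r L J I, coord_functional m n r I)) pairs"
  have expand: "Psi m n r L (X, w) = glsum (map (\<lambda>(f, L). gmul (f X) (L w)) ps)"
    if X: "X \<in> Emat m n" and w: "w \<in> TrV m n r" for X w
  proof -
    let ?g = "\<lambda>(J, I). dual_app m n r L (unit_tensor J) * action_coeff m r (lift_mat m n X) J I * lift_tensor w I"
    have "map (\<lambda>(f, L). gmul (f X) (L w)) ps = map (\<lambda>p. Rep_grassmann (?g p)) pairs"
      using pairs(1) by (auto simp: ps_def monomial_fun_term[OF L X w])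
    then have "glsum (map (\<lambda>(f, L). gmul (f X) (L w)) ps) = Rep_grassmann (sum_list (map ?g pairs))"
      by (simp add: glsum_Rep_map)
    also have "sum_list (map ?g pairs) = (\<Sum>J\<in>Idx m n r. \<Sum>I\<in>Idx m n r.
        dual_app m n r L (unit_tensor J) * action_coeff m r (lift_mat m n X) J I * lift_tensor w I)"
      using pairs by (simp add: sum_list_distinct_conv_sum_set sum.cartesian_product)
    finally show ?thesis using X w by (simp add: Psi_def dual_tact_expansion[OF L X w])
  qed
  show ?thesis unfolding PT_def
  proof (intro CollectI conjI allI impI exI[of _ ps])
    show "\<And>X w. \<not> (X \<in> Emat m n \<and> w \<in> TrV m n r) \<Longrightarrow> Psi m n r L (X, w) = gzero"
      by (auto simp: Psi_def)
    show "\<forall>(f, L)\<in>set ps. f \<in> Pr m n r \<and> L \<in> TrVd m n r"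
      using pairs(1) by (auto simp: ps_def monomial_fun_Pr[OF L] coord_functional_TrVd)
    show "\<forall>X\<in>Emat m n. \<forall>w\<in>TrV m n r. Psi m n r L (X, w) = glsum (map (\<lambda>(f, L). gmul (f X) (L w)) ps)"
      using expand by blast
  qed
qed

lemma Psi_Gamma:
  assumes L: "L \<in> TrVd m n r"
  shows "Psi m n r L \<in> Gamma m n r"
  unfolding Gamma_def
proof (intro CollectI conjI ballI Psi_PT[OF L])
  fix g assume g: "g \<in> GLV m n"
  note gi = GLV_ginv[OF g] GLV_Emat[OF g]
  show "Rhat m n r g (Psi m n r L) = Psi m n r L"
  proof (rule ext, clarify)
    fix X w
    show "Rhat m n r g (Psi m n r L) (X, w) = Psi m n r L (X, w)"
    proof (cases "X \<in> Emat m n \<and> w \<in> TrV m n r")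
      case True
      then have X: "X \<in> Emat m n" and w: "w \<in> TrV m n r" by auto
      have "tact m n r (mmul m n X g) (tact m n r (ginv m n g) w) = tact m n r (mmul m n (mmul m n X g) (ginv m n g)) w"
        using gi X w by (simp add: tact_comp mmul_Emat)
      also have "mmul m n (mmul m n X g) (ginv m n g) = X"
        using gi X by (simp add: mmul_assoc mmul_mone_right)
      finally show ?thesis using X w gi by (simp add: Rhat_def Psi_def mmul_Emat tact_TrV)
    qed (auto simp: Rhat_def Psi_def)
  qed
qed

lemma Psi_inj: "inj_on (Psi m n r) (TrVd m n r)"
proof (rule inj_onI)
  fix L L' assume L: "L \<in> TrVd m n r" and L': "L' \<in> TrVd m n r" and eq: "Psi m n r L = Psi m n r L'"
  show "L = L'"
  proof
    fix w show "L w = L' w"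
    proof (cases "w \<in> TrV m n r")
      case True
      have "L w = Psi m n r L (mone m n, w)" using True by (simp add: Psi_def mone_Emat tact_mone)
      also have "\<dots> = Psi m n r L' (mone m n, w)" by (simp add: eq)
      also have "\<dots> = L' w" using True by (simp add: Psi_def mone_Emat tact_mone)
      finally show ?thesis .
    qed (use L L' in \<open>simp add: TrVd_def\<close>)
  qed
qed

lemma Psi_equiv:
  assumes g: "g \<in> GLV m n" and L: "L \<in> TrVd m n r"
  shows "Psi m n r (rho_dual m n r g L) = Lhat m n r g (Psi m n r L)"
proof (rule ext, clarify)
  fix X w
  note gi = GLV_ginv[OF g] GLV_Emat[OF g]
  show "Psi m n r (rho_dual m n r g L) (X, w) = Lhat m n r g (Psi m n r L) (X, w)"
  proof (cases "X \<in> Emat m n \<and> w \<in> TrV m n r")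
    case True
    then have X: "X \<in> Emat m n" and w: "w \<in> TrV m n r" by auto
    show ?thesis using X w gi
      by (simp add: Psi_def Lhat_def rho_dual_def tact_TrV tact_comp mmul_Emat)
  qed (auto simp: Lhat_def Psi_def)
qed

lemma Psi_add: "Psi m n r (dadd L L') = fadd (Psi m n r L) (Psi m n r L')"
  by (auto simp: Psi_def dadd_def fadd_def fun_eq_iff gadd_def gzero_def)

lemma Psi_smul: "Psi m n r (dsmul c L) = fsmul c (Psi m n r L)"
  by (auto simp: Psi_def dsmul_def fsmul_def fun_eq_iff gmul_gzero_right)


section \<open>Polynomial dependence on a complex parameter\<close>

definition param_poly :: "(complex \<Rightarrow> grassmann) \<Rightarrow> bool" where
  "param_poly F = (\<exists>N q. \<forall>t. F t = (\<Sum>k<N. scalar (t ^ k) * q k))"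

lemma param_poly_pad:
  assumes "N \<le> M"
  shows "(\<Sum>k<N. scalar (t ^ k) * q k) = (\<Sum>k<M. scalar (t ^ k) * (if k < N then q k else 0))"
proof -
  have "(\<Sum>k<M. scalar (t ^ k) * (if k < N then q k else 0)) = (\<Sum>k<N. scalar (t ^ k) * (if k < N then q k else 0))"
    using assms by (intro sum.mono_neutral_right) auto
  then show ?thesis by simp
qed

lemma param_poly_const[simp]: "param_poly (\<lambda>t. c)"
  unfolding param_poly_def by (rule exI[of _ 1], rule exI[of _ "\<lambda>_. c"]) simp

lemma param_poly_add: assumes "param_poly F" "param_poly G" shows "param_poly (\<lambda>t. F t + G t)"
proof -
  obtain N q where F: "\<And>t. F t = (\<Sum>k<N. scalar (t ^ k) * q k)" using assms(1) by (auto simp: param_poly_def)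
  obtain M p where G: "\<And>t. G t = (\<Sum>k<M. scalar (t ^ k) * p k)" using assms(2) by (auto simp: param_poly_def)
  show ?thesis unfolding param_poly_def
  proof (intro exI allI)
    fix t
    show "F t + G t = (\<Sum>k<N + M. scalar (t ^ k) * ((if k < N then q k else 0) + (if k < M then p k else 0)))"
      using param_poly_pad[of N "N + M" t q] param_poly_pad[of M "N + M" t p]
      by (simp add: F G distrib_left sum.distrib)
  qed
qed

lemma param_poly_sum: "finite A \<Longrightarrow> (\<And>x. x \<in> A \<Longrightarrow> param_poly (F x)) \<Longrightarrow> param_poly (\<lambda>t. \<Sum>x\<in>A. F x t)"
  by (induction A rule: finite_induct) (auto intro: param_poly_add)

lemma param_poly_sum_list: "(\<And>x. x \<in> set xs \<Longrightarrow> param_poly (F x)) \<Longrightarrow> param_poly (\<lambda>t. sum_list (map (\<lambda>x. F x t) xs))"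
  by (induction xs) (auto intro: param_poly_add)

lemma param_poly_lmult: assumes "param_poly F" shows "param_poly (\<lambda>t. c * F t)"
proof -
  obtain N q where F: "\<And>t. F t = (\<Sum>k<N. scalar (t ^ k) * q k)" using assms by (auto simp: param_poly_def)
  show ?thesis unfolding param_poly_def
    by (intro exI[of _ N] exI[of _ "\<lambda>k. c * q k"] allI)
       (simp add: F sum_distrib_left scalar_left_comm[of c])
qed

lemma param_poly_shift: assumes "param_poly F" shows "param_poly (\<lambda>t. scalar t * F t)"
proof -
  obtain N q where F: "\<And>t. F t = (\<Sum>k<N. scalar (t ^ k) * q k)" using assms by (auto simp: param_poly_def)
  show ?thesis unfolding param_poly_def
  proof (intro exI allI)
    fix t
    have "scalar t * F t = (\<Sum>k<N. scalar (t ^ Suc k) * q k)"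
      by (simp add: F sum_distrib_left mult.assoc[symmetric] scalar_mult[symmetric] mult.commute)
    also have "\<dots> = (\<Sum>k<Suc N. scalar (t ^ k) * (case k of 0 \<Rightarrow> 0 | Suc j \<Rightarrow> q j))"
      by (subst sum.lessThan_Suc_shift) simp
    finally show "scalar t * F t = \<dots>" .
  qed
qed

lemma param_poly_scpow: "param_poly F \<Longrightarrow> param_poly (\<lambda>t. scalar (t ^ k) * F t)"
proof (induction k)
  case 0 then show ?case by simp
next
  case (Suc k)
  then have "param_poly (\<lambda>t. scalar t * (scalar (t ^ k) * F t))" by (intro param_poly_shift) auto
  then show ?case by (simp add: scalar_mult mult.assoc)
qed

lemma param_poly_mult: assumes "param_poly F" "param_poly G" shows "param_poly (\<lambda>t. F t * G t)"
proof -
  obtain N q where F: "\<And>t. F t = (\<Sum>k<N. scalar (t ^ k) * q k)" using assms(1) by (auto simp: param_poly_def)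
  have "param_poly (\<lambda>t. \<Sum>k<N. scalar (t ^ k) * (q k * G t))"
    by (intro param_poly_sum param_poly_scpow param_poly_lmult assms(2)) simp
  then show ?thesis by (simp add: F sum_distrib_right mult.assoc)
qed

lemma param_poly_prod_list: "(\<And>x. x \<in> set xs \<Longrightarrow> param_poly (F x)) \<Longrightarrow> param_poly (\<lambda>t. prod_list (map (\<lambda>x. F x t) xs))"
  by (induction xs) (auto intro: param_poly_mult)

lemma param_poly_scalar: "param_poly (\<lambda>t. scalar t)"
  using param_poly_shift[OF param_poly_const[of 1]] by simp

lemma param_poly_diff: "param_poly F \<Longrightarrow> param_poly G \<Longrightarrow> param_poly (\<lambda>t. F t - G t)"
  using param_poly_add[of F "\<lambda>t. (-1) * G t"] param_poly_lmult[of G "-1"] by simp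

lemma Rep_scalar_apply: "Rep_grassmann (scalar c * a) S = c * Rep_grassmann a S"
  by (simp add: scalar_mult_left_Rep gscale_def del: Rep_times)

lemma param_poly_zero:
  assumes P: "param_poly F" and inf: "infinite {t. F t = 0}"
  shows "F 0 = 0"
proof -
  obtain N q where F: "\<And>t. F t = (\<Sum>k<N. scalar (t ^ k) * q k)" using P by (auto simp: param_poly_def)
  have "Rep_grassmann (F 0) S = 0" for S
  proof -
    define p where "p = (\<Sum>k<N. monom (Rep_grassmann (q k) S) k)"
    have pe: "poly p t = Rep_grassmann (F t) S" for t
      by (simp add: p_def F Rep_sum gsum_def poly_sum poly_monom Rep_scalar_apply mult.commute del: Rep_times)
    have "{t. F t = 0} \<subseteq> {t. poly p t = 0}" by (auto simp: pe gzero_def)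
    then have "infinite {t. poly p t = 0}" using inf finite_subset by blast
    then have "p = 0" using poly_roots_finite by blast
    then show ?thesis using pe[of 0] by simp
  qed
  then show ?thesis by (simp add: Rep_grassmann_inject[symmetric] gzero_def fun_eq_iff)
qed


definition deg_ge :: "nat \<Rightarrow> grassmann \<Rightarrow> bool" where
  "deg_ge k a = (\<forall>S. Rep_grassmann a S \<noteq> 0 \<longrightarrow> k \<le> card S)"
definition gens_in :: "nat set \<Rightarrow> grassmann \<Rightarrow> bool" where
  "gens_in G a = (\<forall>S. Rep_grassmann a S \<noteq> 0 \<longrightarrow> S \<subseteq> G)"

lemma deg_ge_zero[simp]: "deg_ge k 0" by (simp add: deg_ge_def gzero_def)
lemma deg_ge_0[simp]: "deg_ge 0 a" by (simp add: deg_ge_def)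
lemma gens_in_zero[simp]: "gens_in G 0" by (simp add: gens_in_def gzero_def)

lemma deg_ge_mult: assumes "deg_ge j a" "deg_ge k b" shows "deg_ge (j + k) (a * b)"
  unfolding deg_ge_def
proof (intro allI impI)
  fix S assume "Rep_grassmann (a * b) S \<noteq> 0"
  then obtain T where T: "finite S" "T \<subseteq> S" "Rep_grassmann a T \<noteq> 0" "Rep_grassmann b (S - T) \<noteq> 0"
    by (auto elim: gmul_nonzeroE)
  have "card S = card T + card (S - T)" using T
    by (metis card_Diff_subset card_mono diff_add_inverse finite_subset le_add_diff_inverse)
  then show "j + k \<le> card S" using T assms by (auto simp: deg_ge_def) (metis add_le_mono)
qed

lemma gens_in_mult: assumes "gens_in G a" "gens_in G b" shows "gens_in G (a * b)"
  unfolding gens_in_def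
proof (intro allI impI)
  fix S assume "Rep_grassmann (a * b) S \<noteq> 0"
  then obtain T where T: "finite S" "T \<subseteq> S" "Rep_grassmann a T \<noteq> 0" "Rep_grassmann b (S - T) \<noteq> 0"
    by (auto elim: gmul_nonzeroE)
  then have "T \<subseteq> G" "S - T \<subseteq> G" using assms by (auto simp: gens_in_def)
  then show "S \<subseteq> G" by blast
qed

lemma Rep_plus_nonzero: "Rep_grassmann (a + b) S \<noteq> 0 \<Longrightarrow> Rep_grassmann a S \<noteq> 0 \<or> Rep_grassmann b S \<noteq> 0"
  by (auto simp: gadd_def)
lemma deg_ge_add: "deg_ge k a \<Longrightarrow> deg_ge k b \<Longrightarrow> deg_ge k (a + b)"
  unfolding deg_ge_def by (meson Rep_plus_nonzero)
lemma gens_in_add: "gens_in G a \<Longrightarrow> gens_in G b \<Longrightarrow> gens_in G (a + b)"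
  unfolding gens_in_def by (meson Rep_plus_nonzero)
lemma deg_ge_sum: "(\<And>x. x \<in> A \<Longrightarrow> deg_ge k (f x)) \<Longrightarrow> deg_ge k (sum f A)"
  by (induction A rule: infinite_finite_induct) (auto intro: deg_ge_add)
lemma gens_in_sum: "(\<And>x. x \<in> A \<Longrightarrow> gens_in G (f x)) \<Longrightarrow> gens_in G (sum f A)"
  by (induction A rule: infinite_finite_induct) (auto intro: gens_in_add)
lemma gens_in_scalar: "gens_in G (scalar c)"
  by (auto simp: gens_in_def Rep_scalar gscale_def gone_def)

lemma deg_ge_gens_in_eq_zero:
  assumes "deg_ge k a" "gens_in G a" "finite G" "card G < k" shows "a = 0"
proof -
  have "Rep_grassmann a S = 0" for S
  proof (rule ccontr)
    assume "Rep_grassmann a S \<noteq> 0"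
    then have k: "k \<le> card S" and SG: "S \<subseteq> G" using assms by (auto simp: deg_ge_def gens_in_def)
    show False using card_mono[OF assms(3) SG] assms(4) k by simp
  qed
  then show ?thesis by (simp add: Rep_grassmann_inject[symmetric] gzero_def fun_eq_iff)
qed

definition generators :: "grassmann \<Rightarrow> nat set" where
  "generators a = \<Union>{S. Rep_grassmann a S \<noteq> 0}"

lemma finite_generators: "finite (generators a)"
  using Rep_grassmann_Lam[of a] unfolding generators_def Lam_def by auto

lemma gens_in_generators: "generators a \<subseteq> G \<Longrightarrow> gens_in G a"
  by (auto simp: gens_in_def generators_def)

lemma deg_ge_1_if_body_zero: assumes "Rep_grassmann a {} = 0" shows "deg_ge 1 a"
  unfolding deg_ge_def
proof (intro allI impI)
  fix S assume S: "Rep_grassmann a S \<noteq> 0"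
  then have "finite S" using Rep_grassmann_Lam[of a] by (auto simp: Lam_def)
  moreover have "S \<noteq> {}" using S assms by auto
  ultimately show "1 \<le> card S" by (simp add: Suc_le_eq card_gt_0_iff)
qed

definition mat_deg_ge :: "nat \<Rightarrow> grassmann mat \<Rightarrow> bool" where
  "mat_deg_ge k M = (\<forall>i<dim_row M. \<forall>j<dim_col M. deg_ge k (M $$ (i, j)))"
definition mat_gens_in :: "nat set \<Rightarrow> grassmann mat \<Rightarrow> bool" where
  "mat_gens_in G M = (\<forall>i<dim_row M. \<forall>j<dim_col M. gens_in G (M $$ (i, j)))"

lemma mat_deg_ge_mult:
  "A \<in> carrier_mat a b \<Longrightarrow> B \<in> carrier_mat b c \<Longrightarrow> mat_deg_ge j A \<Longrightarrow> mat_deg_ge k B \<Longrightarrow> mat_deg_ge (j + k) (A * B)"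
  by (auto simp: mat_deg_ge_def scalar_prod_def intro!: deg_ge_sum deg_ge_mult)
lemma mat_gens_in_mult:
  "A \<in> carrier_mat a b \<Longrightarrow> B \<in> carrier_mat b c \<Longrightarrow> mat_gens_in G A \<Longrightarrow> mat_gens_in G B \<Longrightarrow> mat_gens_in G (A * B)"
  by (auto simp: mat_gens_in_def scalar_prod_def intro!: gens_in_sum gens_in_mult)

lemma mat_deg_ge_gens_in_pow:
  assumes P: "P \<in> carrier_mat d d" "mat_deg_ge 1 P" "mat_gens_in G P"
  shows "mat_deg_ge k (P ^\<^sub>m k) \<and> mat_gens_in G (P ^\<^sub>m k)"
proof (induction k)
  case 0 then show ?case using P
    by (auto simp: mat_deg_ge_def mat_gens_in_def gens_in_scalar[of G 1, simplified]
        gens_in_scalar[of G 0, simplified])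
next
  case (Suc k)
  have "mat_deg_ge (k + 1) (P ^\<^sub>m k * P)" using Suc P by (intro mat_deg_ge_mult[of _ d d _ d]) auto
  moreover have "mat_gens_in G (P ^\<^sub>m k * P)" using Suc P by (intro mat_gens_in_mult[of _ d d _ d]) auto
  ultimately show ?case by simp
qed

text \<open>A matrix whose entries have vanishing body is nilpotent: its entries involve only the
  finitely many generators G occurring in it, and a product of more than card G such entries vanishes.\<close>

lemma mat_pow_eq_zero_if_deg_ge_1:
  assumes P: "P \<in> carrier_mat d d" "mat_deg_ge 1 P"
  obtains K where "P ^\<^sub>m K = 0\<^sub>m d d"
proof
  define G where "G = (\<Union>p\<in>{..<d} \<times> {..<d}. generators (P $$ p))"
  have G: "finite G" "mat_gens_in G P"
    using P by (auto simp: G_def finite_generators mat_gens_in_def intro!: gens_in_generators)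
  define K where "K = Suc (card G)"
  have "mat_deg_ge K (P ^\<^sub>m K)" "mat_gens_in G (P ^\<^sub>m K)"
    using mat_deg_ge_gens_in_pow[OF P G(2)] by blast+
  then show "P ^\<^sub>m K = 0\<^sub>m d d"
    using P G(1) by (intro eq_matI) (auto simp: mat_deg_ge_def mat_gens_in_def K_def
        intro!: deg_ge_gens_in_eq_zero)
qed

fun geom_sum :: "nat \<Rightarrow> grassmann mat \<Rightarrow> nat \<Rightarrow> grassmann mat" where
  "geom_sum d P 0 = 0\<^sub>m d d"
| "geom_sum d P (Suc k) = geom_sum d P k + P ^\<^sub>m k"

lemma geom_sum_carrier: "P \<in> carrier_mat d d \<Longrightarrow> geom_sum d P k \<in> carrier_mat d d"
  by (induction k) auto

lemma pow_mat_commute: assumes P: "P \<in> carrier_mat d d" shows "P * P ^\<^sub>m k = P ^\<^sub>m k * P"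
proof (induction k)
  case 0 then show ?case using P by simp
next
  case (Suc k)
  have "P * P ^\<^sub>m Suc k = (P * P ^\<^sub>m k) * P"
    using P by (simp add: assoc_mult_mat[of P d d "P ^\<^sub>m k" d P d])
  then show ?case using Suc by simp
qed

lemma geom_sum_right:
  assumes P: "P \<in> carrier_mat d d"
  shows "geom_sum d P k * (1\<^sub>m d - P) = 1\<^sub>m d - P ^\<^sub>m k"
proof (induction k)
  case 0 then show ?case using P by (auto intro!: eq_matI)
next
  case (Suc k)
  have c: "geom_sum d P k \<in> carrier_mat d d" "P ^\<^sub>m k \<in> carrier_mat d d" "1\<^sub>m d - P \<in> carrier_mat d d"
    using P geom_sum_carrier by auto
  have "geom_sum d P (Suc k) * (1\<^sub>m d - P) = geom_sum d P k * (1\<^sub>m d - P) + P ^\<^sub>m k * (1\<^sub>m d - P)"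
    using c by (simp add: add_mult_distrib_mat)
  also have "P ^\<^sub>m k * (1\<^sub>m d - P) = P ^\<^sub>m k - P ^\<^sub>m Suc k"
    using mult_minus_distrib_mat[OF c(2) one_carrier_mat P] c P by simp
  also have "geom_sum d P k * (1\<^sub>m d - P) + (P ^\<^sub>m k - P ^\<^sub>m Suc k) = 1\<^sub>m d - P ^\<^sub>m Suc k"
    unfolding Suc.IH using P by (intro eq_matI) auto
  finally show ?case .
qed

lemma geom_sum_left:
  assumes P: "P \<in> carrier_mat d d"
  shows "(1\<^sub>m d - P) * geom_sum d P k = 1\<^sub>m d - P ^\<^sub>m k"
proof (induction k)
  case 0 then show ?case using P by (auto intro!: eq_matI)
next
  case (Suc k)
  have c: "geom_sum d P k \<in> carrier_mat d d" "P ^\<^sub>m k \<in> carrier_mat d d" "1\<^sub>m d - P \<in> carrier_mat d d"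
    using P geom_sum_carrier by auto
  have "(1\<^sub>m d - P) * geom_sum d P (Suc k) = (1\<^sub>m d - P) * geom_sum d P k + (1\<^sub>m d - P) * P ^\<^sub>m k"
    using c by (simp add: mult_add_distrib_mat)
  also have "(1\<^sub>m d - P) * P ^\<^sub>m k = P ^\<^sub>m k - P ^\<^sub>m Suc k"
    using minus_mult_distrib_mat[OF one_carrier_mat P c(2)] c P pow_mat_commute[OF P, of k] by simp
  also have "(1\<^sub>m d - P) * geom_sum d P k + (P ^\<^sub>m k - P ^\<^sub>m Suc k) = 1\<^sub>m d - P ^\<^sub>m Suc k"
    unfolding Suc.IH using P by (intro eq_matI) auto
  finally show ?case .
qed

lemma geom_sum_inverse_one_minus:
  assumes P: "P \<in> carrier_mat d d" and nil: "P ^\<^sub>m k = 0\<^sub>m d d"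
  shows "geom_sum d P k * (1\<^sub>m d - P) = 1\<^sub>m d" "(1\<^sub>m d - P) * geom_sum d P k = 1\<^sub>m d"
  unfolding geom_sum_right[OF P] geom_sum_left[OF P] nil by (auto intro!: eq_matI)

lemma even_mat_geom_sum: "P \<in> carrier_mat d d \<Longrightarrow> even_mat m P \<Longrightarrow> even_mat m (geom_sum d P k)"
  by (induction k) (auto intro!: even_mat_add even_mat_pow geom_sum_carrier simp: even_mat_zero)

section \<open>Invertibility of even matrices with invertible body\<close>

definition body_mat :: "grassmann mat \<Rightarrow> complex mat" where
  "body_mat T = mat (dim_row T) (dim_col T) (\<lambda>(i, j). Rep_grassmann (T $$ (i, j)) {})"
definition scalar_mat :: "complex mat \<Rightarrow> grassmann mat" where
  "scalar_mat M = mat (dim_row M) (dim_col M) (\<lambda>(i, j). scalar (M $$ (i, j)))"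

lemma body_mat_carrier[simp]: "T \<in> carrier_mat a b \<Longrightarrow> body_mat T \<in> carrier_mat a b"
  by (auto simp: body_mat_def)
lemma scalar_mat_carrier[simp]: "M \<in> carrier_mat a b \<Longrightarrow> scalar_mat M \<in> carrier_mat a b"
  by (auto simp: scalar_mat_def)

lemma scalar_mat_mult:
  assumes "M \<in> carrier_mat a b" "N \<in> carrier_mat b c"
  shows "scalar_mat (M * N) = scalar_mat M * scalar_mat N"
  using assms by (intro eq_matI) (auto simp: scalar_mat_def scalar_prod_def scalar_sum scalar_mult)

lemma scalar_mat_one: "scalar_mat (1\<^sub>m k) = 1\<^sub>m k"
  by (intro eq_matI) (auto simp: scalar_mat_def)

lemma Rep_scalar_empty: "Rep_grassmann (scalar c) {} = c"
  by (simp add: Rep_scalar gscale_def gone_def)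

lemma Rep_minus_apply: "Rep_grassmann (a - b) S = Rep_grassmann a S - Rep_grassmann b S"
  by (simp add: gadd_def gscale_def)

lemma Rep_plus_apply: "Rep_grassmann (a + b) S = Rep_grassmann a S + Rep_grassmann b S"
  by (simp add: gadd_def)

lemma body_mat_even_off_block:
  assumes T: "T \<in> carrier_mat d d" "even_mat m T" and ij: "i < d" "j < d" "pty m i \<noteq> pty m j"
  shows "body_mat T $$ (i, j) = 0"
proof -
  have "parity True (T $$ (i, j))" using T ij unfolding even_mat_def by force
  then show ?thesis using T ij by (auto simp: body_mat_def parity_def Defs.hom_def)
qed

lemma inverse_off_block_zero:
  fixes B C :: "complex mat"
  assumes B: "B \<in> carrier_mat d d" and C: "C \<in> carrier_mat d d"
    and CB: "C * B = 1\<^sub>m d" and BC: "B * C = 1\<^sub>m d"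
    and block: "\<And>i j. i < d \<Longrightarrow> j < d \<Longrightarrow> pty m i \<noteq> pty m j \<Longrightarrow> B $$ (i, j) = 0"
    and ij: "i < d" "j < d" "pty m i \<noteq> pty m j"
  shows "C $$ (i, j) = 0"
proof -
  define C' where "C' = mat d d (\<lambda>(i, j). if pty m i = pty m j then C $$ (i, j) else 0)"
  have C'c: "C' \<in> carrier_mat d d" by (simp add: C'_def)
  have BC': "B * C' = 1\<^sub>m d"
  proof (rule eq_matI)
    fix i j assume "i < dim_row (1\<^sub>m d :: complex mat)" "j < dim_col (1\<^sub>m d :: complex mat)"
    then have ij': "i < d" "j < d" by auto
    have "(B * C') $$ (i, j) = (\<Sum>k\<in>{0..<d}. B $$ (i, k) * C' $$ (k, j))"
      using ij' B C'c by (simp add: scalar_prod_def)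
    also have "\<dots> = (\<Sum>k\<in>{0..<d}. if pty m i = pty m j then B $$ (i, k) * C $$ (k, j) else 0)"
      by (rule sum.cong) (use ij' block in \<open>auto simp: C'_def\<close>)
    also have "\<dots> = (if pty m i = pty m j then (B * C) $$ (i, j) else 0)"
      using ij' B C by (simp add: scalar_prod_def)
    finally show "(B * C') $$ (i, j) = 1\<^sub>m d $$ (i, j)" using ij' BC by auto
  qed (use B C'c in auto)
  have "C = (C * B) * C'" using C B C'c by (simp add: BC')
  then have "C = C'" using C'c by (simp add: CB)
  then have "C $$ (i, j) = C' $$ (i, j)" by simp
  then show ?thesis using ij by (simp add: C'_def)
qed

lemma even_mat_scalar_mat:
  assumes "M \<in> carrier_mat d d" "\<And>i j. i < d \<Longrightarrow> j < d \<Longrightarrow> pty m i \<noteq> pty m j \<Longrightarrow> M $$ (i, j) = 0"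
  shows "even_mat m (scalar_mat M)"
  unfolding even_mat_def
proof (intro allI impI)
  fix i j assume "i < dim_row (scalar_mat M)" "j < dim_col (scalar_mat M)"
  then show "parity (pty m i \<noteq> pty m j) (scalar_mat M $$ (i, j))"
    using assms by (cases "pty m i = pty m j") (auto simp: scalar_mat_def)
qed

lemma scalar_body_mat_inverse:
  assumes T: "T \<in> carrier_mat d d" "even_mat m T" and det: "det (body_mat T) \<noteq> 0"
  obtains Ch where "Ch \<in> carrier_mat d d" "even_mat m Ch"
    "Ch * scalar_mat (body_mat T) = 1\<^sub>m d" "scalar_mat (body_mat T) * Ch = 1\<^sub>m d"
proof -
  have Bc: "body_mat T \<in> carrier_mat d d" using T by simp
  obtain C where C: "C \<in> carrier_mat d d" "C * body_mat T = 1\<^sub>m d" "body_mat T * C = 1\<^sub>m d"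
    using det_non_zero_imp_unit[OF Bc det] unfolding Units_def ring_mat_def by auto
  have "scalar_mat C * scalar_mat (body_mat T) = 1\<^sub>m d" "scalar_mat (body_mat T) * scalar_mat C = 1\<^sub>m d"
    unfolding scalar_mat_mult[OF C(1) Bc, symmetric] scalar_mat_mult[OF Bc C(1), symmetric]
      C(2,3) scalar_mat_one by simp_all
  moreover have "even_mat m (scalar_mat C)"
    by (rule even_mat_scalar_mat[OF C(1) inverse_off_block_zero[OF Bc C body_mat_even_off_block[OF T]]])
  moreover have "scalar_mat C \<in> carrier_mat d d" using C(1) by simp
  ultimately show ?thesis using that by blast
qed

lemma mat_deg_ge_1_soul:
  assumes T: "T \<in> carrier_mat d d"
  shows "mat_deg_ge 1 (scalar_mat (body_mat T) - T)"
  unfolding mat_deg_ge_def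
proof (intro allI impI)
  fix i j assume "i < dim_row (scalar_mat (body_mat T) - T)" "j < dim_col (scalar_mat (body_mat T) - T)"
  then have "Rep_grassmann ((scalar_mat (body_mat T) - T) $$ (i, j)) {} = 0"
    using T by (simp add: scalar_mat_def body_mat_def Rep_minus_apply Rep_scalar_empty del: Rep_minus)
  then show "deg_ge 1 ((scalar_mat (body_mat T) - T) $$ (i, j))" by (rule deg_ge_1_if_body_zero)
qed

text \<open>Write T = B - N with B the (complex) body and N the nilpotent soul. With C the inverse of
  the body, C T = 1 - C N, so the geometric series in C N inverts T.\<close>

lemma even_mat_invertible_if_body_invertible:
  assumes T: "T \<in> carrier_mat d d" "even_mat m T" and det: "det (body_mat T) \<noteq> 0"
  obtains H where "H \<in> carrier_mat d d" "even_mat m H" "H * T = 1\<^sub>m d" "T * H = 1\<^sub>m d"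
proof -
  define Bh where "Bh = scalar_mat (body_mat T)"
  obtain Ch where Chc: "Ch \<in> carrier_mat d d" and evCh: "even_mat m Ch"
    and ChBh: "Ch * Bh = 1\<^sub>m d" and BhCh: "Bh * Ch = 1\<^sub>m d"
    using scalar_body_mat_inverse[OF T det] unfolding Bh_def by blast
  have Bhc: "Bh \<in> carrier_mat d d" using T(1) by (simp add: Bh_def)
  have evBh: "even_mat m Bh"
    unfolding Bh_def by (rule even_mat_scalar_mat[OF body_mat_carrier[OF T(1)] body_mat_even_off_block[OF T]])
  define N where "N = Bh - T"
  define P where "P = Ch * N"
  have Nc: "N \<in> carrier_mat d d" and Pc: "P \<in> carrier_mat d d"
    using T(1) Chc by (auto simp: N_def P_def)
  have "mat_deg_ge 1 N" unfolding N_def Bh_def by (rule mat_deg_ge_1_soul[OF T(1)])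
  then have "mat_deg_ge (0 + 1) P" unfolding P_def
    by (intro mat_deg_ge_mult[OF Chc Nc]) (simp add: mat_deg_ge_def)
  then obtain K where nil: "P ^\<^sub>m K = 0\<^sub>m d d"
    using mat_pow_eq_zero_if_deg_ge_1[OF Pc] by auto
  define U where "U = geom_sum d P K"
  have Uc: "U \<in> carrier_mat d d" unfolding U_def by (rule geom_sum_carrier[OF Pc])
  have TBN: "T = Bh - N" using T Bhc by (intro eq_matI) (auto simp: N_def)
  have ChT: "Ch * T = 1\<^sub>m d - P"
    unfolding TBN P_def mult_minus_distrib_mat[OF Chc Bhc Nc] ChBh ..
  have T_factor: "T = Bh * (1\<^sub>m d - P)"
  proof -
    have "Bh * (1\<^sub>m d - P) = Bh * (Ch * T)" by (simp add: ChT)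
    also have "\<dots> = T" using Bhc Chc T(1) by (simp add: assoc_mult_mat[symmetric, of Bh d d Ch d T d] BhCh)
    finally show ?thesis by simp
  qed
  define H where "H = U * Ch"
  have "H * T = U * (1\<^sub>m d - P)"
    using Uc Chc T(1) by (simp add: H_def assoc_mult_mat[of U d d Ch d T d] ChT)
  then have HT: "H * T = 1\<^sub>m d" unfolding U_def geom_sum_inverse_one_minus(1)[OF Pc nil] .
  have "T * U = Bh * (1\<^sub>m d - P) * U" using T_factor by simp
  also have "\<dots> = Bh * ((1\<^sub>m d - P) * U)"
    by (rule assoc_mult_mat) (use Bhc Pc Uc in auto)
  finally have TU: "T * U = Bh" using Bhc by (simp add: U_def geom_sum_inverse_one_minus(2)[OF Pc nil])
  have TH: "T * H = 1\<^sub>m d"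
    using Uc Chc T(1) by (simp add: H_def assoc_mult_mat[symmetric, of T d d U d Ch d] TU BhCh)
  have evN: "even_mat m N" unfolding N_def by (rule even_mat_minus[OF Bhc T(1) evBh T(2)])
  have "even_mat m P" unfolding P_def by (rule even_mat_mult[OF Chc Nc evCh evN])
  then have "even_mat m U" unfolding U_def by (rule even_mat_geom_sum[OF Pc])
  then have "even_mat m H" unfolding H_def by (rule even_mat_mult[OF Uc Chc _ evCh])
  moreover have "H \<in> carrier_mat d d" unfolding H_def using Uc Chc by simp
  ultimately show ?thesis using that HT TH by blast
qed


definition shift_family :: "nat \<Rightarrow> nat \<Rightarrow> Defs.mat \<Rightarrow> complex \<Rightarrow> grassmann mat" where
  "shift_family m n X t = mat (m + n) (m + n) (\<lambda>(i, j). lift_mat m n X $$ (i, j) + (if i = j then scalar t else 0))"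

lemma shift_family_carrier[simp]: "shift_family m n X t \<in> carrier_mat (m + n) (m + n)"
  by (simp add: shift_family_def)

lemma shift_family_entry: "i < m + n \<Longrightarrow> j < m + n \<Longrightarrow>
    shift_family m n X t $$ (i, j) = lift_mat m n X $$ (i, j) + (if i = j then scalar t else 0)"
  by (simp add: shift_family_def)

lemma shift_family_0: "shift_family m n X 0 = lift_mat m n X"
  by (intro eq_matI) (auto simp: shift_family_def lift_mat_def)

lemma shift_family_even: assumes X: "X \<in> Emat m n" shows "even_mat m (shift_family m n X t)"
  unfolding even_mat_def
proof (intro allI impI)
  fix i j assume ij: "i < dim_row (shift_family m n X t)" "j < dim_col (shift_family m n X t)"
  then have ij': "i < m + n" "j < m + n" by (auto simp: shift_family_def)
  have a: "parity (pty m i \<noteq> pty m j) (lift_mat m n X $$ (i, j))"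
    using even_mat_lift_mat[OF X] ij' unfolding even_mat_def by (simp add: lift_mat_def)
  have b: "parity (pty m i \<noteq> pty m j) (if i = j then scalar t else 0)" by auto
  show "parity (pty m i \<noteq> pty m j) (shift_family m n X t $$ (i, j))"
    using parity_add[OF a b] ij' by (simp add: shift_family_entry)
qed

lemma body_mat_shift_family: "body_mat (shift_family m n X t) = body_mat (lift_mat m n X) + t \<cdot>\<^sub>m 1\<^sub>m (m + n)"
  by (intro eq_matI) (auto simp: body_mat_def shift_family_def lift_mat_def Rep_plus_apply Rep_scalar_empty gzero_def
      simp del: Rep_plus)

lemma finite_det_shift_eq_zero:
  fixes B :: "complex mat"
  assumes B: "B \<in> carrier_mat k k"
  shows "finite {t. det (B + t \<cdot>\<^sub>m 1\<^sub>m k) = 0}"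
proof -
  have cp: "char_poly B \<noteq> 0" using degree_monic_char_poly[OF B] by auto
  have "{t. det (B + t \<cdot>\<^sub>m 1\<^sub>m k) = 0} \<subseteq> uminus ` {x. poly (char_poly B) x = 0}"
  proof
    fix t assume "t \<in> {t. det (B + t \<cdot>\<^sub>m 1\<^sub>m k) = 0}"
    then have "det (char_matrix B (- t)) = 0" using B by (simp add: char_matrix_def)
    then have "eigenvalue B (- t)" using eigenvalue_det[OF B] by simp
    then have "poly (char_poly B) (- t) = 0" using eigenvalue_root_char_poly[OF B] by simp
    then show "t \<in> uminus ` {x. poly (char_poly B) x = 0}" by (intro image_eqI[of _ _ "- t"]) auto
  qed
  moreover have "finite (uminus ` {x. poly (char_poly B) x = 0})" using poly_roots_finite[OF cp] by simp
  ultimately show ?thesis by (rule finite_subset)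
qed

lemma raw_mat_GLV_if_body_invertible:
  assumes A: "A \<in> carrier_mat (m + n) (m + n)" "even_mat m A" and det: "det (body_mat A) \<noteq> 0"
  shows "raw_mat m n A \<in> GLV m n"
proof -
  obtain H where H: "H \<in> carrier_mat (m + n) (m + n)" "even_mat m H"
    "H * A = 1\<^sub>m (m + n)" "A * H = 1\<^sub>m (m + n)"
    using even_mat_invertible_if_body_invertible[OF A det] by blast
  show ?thesis unfolding GLV_def using A H
    by (auto simp: mmul_raw_mat mone_raw_mat raw_mat_Emat intro!: bexI[of _ "raw_mat m n H"])
qed

lemma infinite_shift_family_GLV:
  assumes X: "X \<in> Emat m n"
  shows "infinite {t. raw_mat m n (shift_family m n X t) \<in> GLV m n}"
proof -
  have "- {t. raw_mat m n (shift_family m n X t) \<in> GLV m n}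
      \<subseteq> {t. det (body_mat (lift_mat m n X) + t \<cdot>\<^sub>m 1\<^sub>m (m + n)) = 0}"
    using raw_mat_GLV_if_body_invertible[OF shift_family_carrier shift_family_even[OF X]]
    by (auto simp: body_mat_shift_family)
  then have "finite (- {t. raw_mat m n (shift_family m n X t) \<in> GLV m n})"
    by (rule finite_subset) (simp add: finite_det_shift_eq_zero)
  then show ?thesis by (metis Compl_partition finite_UnI infinite_UNIV_char_0)
qed

lemma gprod_Abs: "(\<And>x. x \<in> set xs \<Longrightarrow> h x \<in> Lam) \<Longrightarrow> gprod (map h xs) = Rep_grassmann (prod_list (map (\<lambda>x. Abs_grassmann (h x)) xs))"
  by (induction xs) (auto simp: gprod_def)

lemma glsum_Abs: "(\<And>x. x \<in> set xs \<Longrightarrow> h x \<in> Lam) \<Longrightarrow> glsum (map h xs) = Rep_grassmann (sum_list (map (\<lambda>x. Abs_grassmann (h x)) xs))"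
  by (induction xs) (auto simp: glsum_def)

lemma Abs_gmul: "a \<in> Lam \<Longrightarrow> b \<in> Lam \<Longrightarrow> Abs_grassmann (gmul a b) = Abs_grassmann a * Abs_grassmann b"
  by (simp add: Rep_grassmann_inject[symmetric])
lemma Abs_gadd: "a \<in> Lam \<Longrightarrow> b \<in> Lam \<Longrightarrow> Abs_grassmann (gadd a b) = Abs_grassmann a + Abs_grassmann b"
  by (simp add: Rep_grassmann_inject[symmetric])

lemma Pr_expansion:
  assumes f: "f \<in> Pr m n r"
  obtains cs where "\<And>Y. Y \<in> Emat m n \<Longrightarrow> f Y = Rep_grassmann
      (sum_list (map (\<lambda>(c, ks). Abs_grassmann c * prod_list (map (\<lambda>(i, j). Abs_grassmann (Y i j)) ks)) cs))"
proof -
  obtain cs where cs: "\<forall>(c, ks)\<in>set cs. c \<in> Lam \<and> length ks = r \<and> (\<forall>(i, j)\<in>set ks. i < m + n \<and> j < m + n)"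
    "\<forall>X\<in>Emat m n. f X = glsum (map (\<lambda>(c, ks). gmul c (gprod (map (\<lambda>(i, j). X i j) ks))) cs)"
    using f unfolding Pr_def by auto
  have "f Y = Rep_grassmann
      (sum_list (map (\<lambda>(c, ks). Abs_grassmann c * prod_list (map (\<lambda>(i, j). Abs_grassmann (Y i j)) ks)) cs))"
    if Y: "Y \<in> Emat m n" for Y
  proof -
    have entries: "\<And>ks. gprod (map (\<lambda>(i, j). Y i j) ks) =
        Rep_grassmann (prod_list (map (\<lambda>(i, j). Abs_grassmann (Y i j)) ks))"
      by (subst gprod_Abs) (auto simp: Emat_Lam[OF Y] split_def)
    have "f Y = glsum (map (\<lambda>(c, ks). gmul c (gprod (map (\<lambda>(i, j). Y i j) ks))) cs)"
      using cs(2) Y by blast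
    also have "\<dots> = glsum (map (\<lambda>(c, ks). Rep_grassmann
        (Abs_grassmann c * prod_list (map (\<lambda>(i, j). Abs_grassmann (Y i j)) ks))) cs)"
      by (rule arg_cong[where f = glsum], rule map_cong[OF refl]) (use cs(1) in \<open>auto simp: entries\<close>)
    also have "\<dots> = Rep_grassmann
        (sum_list (map (\<lambda>(c, ks). Abs_grassmann c * prod_list (map (\<lambda>(i, j). Abs_grassmann (Y i j)) ks)) cs))"
      by (simp add: Rep_sum_list split_def o_def)
    finally show ?thesis .
  qed
  then show ?thesis by (rule that)
qed

lemma Pr_Lam: "f \<in> Pr m n r \<Longrightarrow> Y \<in> Emat m n \<Longrightarrow> f Y \<in> Lam"
  by (metis Pr_expansion Rep_grassmann_Lam)

lemma PT_expansion:
  assumes Phi: "\<Phi> \<in> PT m n r"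
  obtains ps where "\<forall>(f, L)\<in>set ps. f \<in> Pr m n r \<and> L \<in> TrVd m n r"
    "\<And>X w. X \<in> Emat m n \<Longrightarrow> w \<in> TrV m n r \<Longrightarrow>
       \<Phi> (X, w) = Rep_grassmann (sum_list (map (\<lambda>(f, L). Abs_grassmann (f X) * Abs_grassmann (L w)) ps))"
proof -
  obtain ps where ps: "\<forall>(f, L)\<in>set ps. f \<in> Pr m n r \<and> L \<in> TrVd m n r"
    and rep: "\<forall>X\<in>Emat m n. \<forall>w\<in>TrV m n r. \<Phi> (X, w) = glsum (map (\<lambda>(f, L). gmul (f X) (L w)) ps)"
    using Phi unfolding PT_def by auto
  have "\<Phi> (X, w) = Rep_grassmann (sum_list (map (\<lambda>(f, L). Abs_grassmann (f X) * Abs_grassmann (L w)) ps))"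
    if X: "X \<in> Emat m n" and w: "w \<in> TrV m n r" for X w
  proof -
    have "\<Phi> (X, w) = glsum (map (\<lambda>(f, L). gmul (f X) (L w)) ps)" using rep X w by auto
    also have "\<dots> = Rep_grassmann (sum_list (map (\<lambda>x. Abs_grassmann ((\<lambda>(f, L). gmul (f X) (L w)) x)) ps))"
      by (rule glsum_Abs) (use ps X w in \<open>auto simp: Pr_Lam TrVd_Lam\<close>)
    also have "map (\<lambda>x. Abs_grassmann ((\<lambda>(f, L). gmul (f X) (L w)) x)) ps
        = map (\<lambda>(f, L). Abs_grassmann (f X) * Abs_grassmann (L w)) ps"
      by (rule map_cong[OF refl]) (use ps X w in \<open>auto simp: Pr_Lam TrVd_Lam Abs_gmul\<close>)
    finally show ?thesis .
  qed
  with ps show ?thesis by (rule that)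
qed

lemma PT_Lam: "\<Phi> \<in> PT m n r \<Longrightarrow> X \<in> Emat m n \<Longrightarrow> w \<in> TrV m n r \<Longrightarrow> \<Phi> (X, w) \<in> Lam"
  by (metis PT_expansion Rep_grassmann_Lam)

lemma PT_outside: "\<Phi> \<in> PT m n r \<Longrightarrow> \<not> (X \<in> Emat m n \<and> w \<in> TrV m n r) \<Longrightarrow> \<Phi> (X, w) = gzero"
  by (simp add: PT_def)

lemma param_poly_Pr:
  assumes f: "f \<in> Pr m n r" and Y: "\<And>t. Y t \<in> Emat m n"
    and entries: "\<And>i j. param_poly (\<lambda>t. Abs_grassmann (Y t i j))"
  shows "param_poly (\<lambda>t. Abs_grassmann (f (Y t)))"
proof -
  obtain cs where cs: "\<And>Y'. Y' \<in> Emat m n \<Longrightarrow> f Y' = Rep_grassmann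
      (sum_list (map (\<lambda>(c, ks). Abs_grassmann c * prod_list (map (\<lambda>(i, j). Abs_grassmann (Y' i j)) ks)) cs))"
    using Pr_expansion[OF f] by metis
  have "param_poly (\<lambda>t. sum_list (map (\<lambda>p. (\<lambda>(c, ks). Abs_grassmann c *
      prod_list (map (\<lambda>q. (\<lambda>(i, j). Abs_grassmann (Y t i j)) q) ks)) p) cs))"
    by (intro param_poly_sum_list) (auto simp: split_def intro!: param_poly_mult param_poly_prod_list entries)
  then show ?thesis by (simp add: cs[OF Y] Rep_grassmann_inverse split_def)
qed

lemma shift_family_entry_param_poly:
  assumes "i < m + n" "j < m + n" shows "param_poly (\<lambda>t. shift_family m n X t $$ (i, j))"
proof (cases "i = j")
  case True
  have "param_poly (\<lambda>t. lift_mat m n X $$ (i, j) + scalar t)"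
    by (intro param_poly_add param_poly_const param_poly_scalar)
  then show ?thesis using assms True by (simp add: shift_family_entry)
next
  case False then show ?thesis using assms by (simp add: shift_family_entry)
qed

lemma raw_mat_shift_family_param_poly:
  "param_poly (\<lambda>t. Abs_grassmann (raw_mat m n (shift_family m n X t) i j))"
proof (cases "i < m + n \<and> j < m + n")
  case True then show ?thesis by (simp add: raw_mat_def Rep_grassmann_inverse shift_family_entry_param_poly)
next
  case False
  have "(\<lambda>t. Abs_grassmann (raw_mat m n (shift_family m n X t) i j)) = (\<lambda>t. 0)"
    unfolding raw_mat_def if_not_P[OF False] zero_grassmann_def ..
  then show ?thesis by simp
qed

lemma param_poly_PT:
  assumes Phi: "\<Phi> \<in> PT m n r" and X: "X \<in> Emat m n" and w: "w \<in> TrV m n r"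
  shows "param_poly (\<lambda>t. Abs_grassmann (\<Phi> (raw_mat m n (shift_family m n X t), w)))"
proof -
  obtain ps where ps: "\<forall>(f, L)\<in>set ps. f \<in> Pr m n r \<and> L \<in> TrVd m n r"
    and expand: "\<And>Y. Y \<in> Emat m n \<Longrightarrow> \<Phi> (Y, w) =
       Rep_grassmann (sum_list (map (\<lambda>(f, L). Abs_grassmann (f Y) * Abs_grassmann (L w)) ps))"
    using PT_expansion[OF Phi] w by metis
  define Y where "Y = (\<lambda>t. raw_mat m n (shift_family m n X t))"
  have YE: "Y t \<in> Emat m n" for t
    unfolding Y_def by (rule raw_mat_Emat[OF shift_family_carrier shift_family_even[OF X]])
  have "param_poly (\<lambda>t. sum_list (map (\<lambda>p. (\<lambda>(f, L). Abs_grassmann (f (Y t)) * Abs_grassmann (L w)) p) ps))"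
  proof (rule param_poly_sum_list)
    fix p assume p: "p \<in> set ps"
    obtain f L where pf: "p = (f, L)" by (cases p)
    have f: "f \<in> Pr m n r" using ps p pf by auto
    have "param_poly (\<lambda>t. Abs_grassmann (f (Y t)) * Abs_grassmann (L w))"
      by (intro param_poly_mult param_poly_const param_poly_Pr[OF f YE])
        (simp add: Y_def raw_mat_shift_family_param_poly)
    then show "param_poly (\<lambda>t. (\<lambda>(f, L). Abs_grassmann (f (Y t)) * Abs_grassmann (L w)) p)"
      by (simp add: pf)
  qed
  then have "param_poly (\<lambda>t. Abs_grassmann (\<Phi> (Y t, w)))"
    by (simp add: expand[OF YE] Rep_grassmann_inverse)
  then show ?thesis by (simp add: Y_def)
qed

text \<open>Elements of PT are determined by their values on GL(V): along the line X + t, the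
  difference of two of them is a polynomial in t vanishing wherever the body of X + t is
  invertible, i.e. for all but finitely many t.\<close>

lemma PT_eq_if_eq_on_GLV:
  assumes Phi: "\<Phi> \<in> PT m n r" and Phi': "\<Phi>' \<in> PT m n r"
    and eq: "\<And>g w. g \<in> GLV m n \<Longrightarrow> w \<in> TrV m n r \<Longrightarrow> \<Phi> (g, w) = \<Phi>' (g, w)"
  shows "\<Phi> = \<Phi>'"
proof (rule ext, clarify)
  fix X w
  show "\<Phi> (X, w) = \<Phi>' (X, w)"
  proof (cases "X \<in> Emat m n \<and> w \<in> TrV m n r")
    case True
    then have X: "X \<in> Emat m n" and w: "w \<in> TrV m n r" by auto
    define Y where "Y = (\<lambda>t. raw_mat m n (shift_family m n X t))"
    define D where "D = (\<lambda>t. Abs_grassmann (\<Phi> (Y t, w)) - Abs_grassmann (\<Phi>' (Y t, w)))"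
    have PD: "param_poly D"
      using param_poly_PT[OF Phi X w] param_poly_PT[OF Phi' X w] unfolding D_def Y_def
      by (rule param_poly_diff)
    have "{t. Y t \<in> GLV m n} \<subseteq> {t. D t = 0}" by (auto simp: D_def eq w)
    then have "infinite {t. D t = 0}"
      using infinite_shift_family_GLV[OF X] infinite_super unfolding Y_def by blast
    with PD have "D 0 = 0" by (rule param_poly_zero)
    moreover have "Y 0 = X" by (simp add: Y_def shift_family_0 raw_mat_lift_mat X)
    ultimately show ?thesis using PT_Lam[OF Phi X w] PT_Lam[OF Phi' X w]
      by (simp add: D_def Abs_grassmann_inject)
  qed (metis PT_outside Phi Phi')
qed

definition functional_at_one :: "nat \<Rightarrow> nat \<Rightarrow> nat \<Rightarrow> fn \<Rightarrow> tdual" where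
  "functional_at_one m n r \<Phi> = (\<lambda>w. if w \<in> TrV m n r then \<Phi> (mone m n, w) else gzero)"

lemma functional_at_one_TrVd:
  assumes Phi: "\<Phi> \<in> PT m n r"
  shows "functional_at_one m n r \<Phi> \<in> TrVd m n r"
proof -
  obtain ps where ps: "\<forall>(f, L)\<in>set ps. f \<in> Pr m n r \<and> L \<in> TrVd m n r"
    and expand: "\<And>w. w \<in> TrV m n r \<Longrightarrow> \<Phi> (mone m n, w) =
       Rep_grassmann (sum_list (map (\<lambda>(f, L). Abs_grassmann (f (mone m n)) * Abs_grassmann (L w)) ps))"
    using PT_expansion[OF Phi] mone_Emat by metis
  let ?L = "functional_at_one m n r \<Phi>"
  show ?thesis
    unfolding TrVd_def
  proof (intro CollectI conjI ballI allI impI)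
    fix w assume w: "w \<in> TrV m n r"
    show "?L w \<in> Lam" using w PT_Lam[OF Phi mone_Emat] by (simp add: functional_at_one_def)
  next
    fix w w' assume w: "w \<in> TrV m n r" and w': "w' \<in> TrV m n r"
    have e: "map (\<lambda>(f, L). Abs_grassmann (f (mone m n)) * Abs_grassmann (L (tadd w w'))) ps
      = map (\<lambda>x. (\<lambda>(f, L). Abs_grassmann (f (mone m n)) * Abs_grassmann (L w)) x
               + (\<lambda>(f, L). Abs_grassmann (f (mone m n)) * Abs_grassmann (L w')) x) ps"
      by (rule map_cong[OF refl]) (use ps w w' in \<open>auto simp: TrVd_def Abs_gadd distrib_left\<close>)
    show "?L (tadd w w') = gadd (?L w) (?L w')"
      using w w' by (simp add: functional_at_one_def tadd_TrV expand e sum_list_addf)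
  next
    fix w c assume w: "w \<in> TrV m n r" and c: "c \<in> Lam"
    have e: "map (\<lambda>(f, L). Abs_grassmann (f (mone m n)) * Abs_grassmann (L (trmul w c))) ps
      = map (\<lambda>x. (\<lambda>(f, L). Abs_grassmann (f (mone m n)) * Abs_grassmann (L w)) x * Abs_grassmann c) ps"
      by (rule map_cong[OF refl]) (use ps w c in \<open>auto simp: TrVd_def Abs_gmul mult.assoc\<close>)
    show "?L (trmul w c) = gmul (?L w) c"
      using w c by (simp add: functional_at_one_def trmul_TrV expand e sum_list_mult_const)
  next
    fix w assume "w \<notin> TrV m n r" then show "?L w = gzero" by (simp add: functional_at_one_def)
  qed
qed

lemma Gamma_eq_Psi_on_GLV:
  assumes Phi: "\<Phi> \<in> Gamma m n r" and g: "g \<in> GLV m n" and w: "w \<in> TrV m n r"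
  shows "\<Phi> (g, w) = Psi m n r (functional_at_one m n r \<Phi>) (g, w)"
proof -
  define h where "h = ginv m n g"
  have h: "h \<in> GLV m n" unfolding h_def by (rule ginv_GLV[OF g])
  have "\<Phi> (g, w) = Rhat m n r h \<Phi> (g, w)" using Phi h unfolding Gamma_def by auto
  also have "\<dots> = \<Phi> (mmul m n g h, tact m n r (ginv m n h) w)"
    using g w by (simp add: Rhat_def GLV_Emat)
  also have "\<dots> = \<Phi> (mone m n, tact m n r g w)"
    using GLV_ginv[OF g] ginv_ginv[OF g] by (simp add: h_def)
  also have "\<dots> = Psi m n r (functional_at_one m n r \<Phi>) (g, w)"
    using g w by (simp add: Psi_def functional_at_one_def tact_TrV GLV_Emat)
  finally show ?thesis .
qed

lemma Gamma_subset_Psi_image: "Gamma m n r \<subseteq> Psi m n r ` TrVd m n r"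
proof
  fix \<Phi> assume Phi: "\<Phi> \<in> Gamma m n r"
  then have PT: "\<Phi> \<in> PT m n r" by (simp add: Gamma_def)
  have L: "functional_at_one m n r \<Phi> \<in> TrVd m n r" by (rule functional_at_one_TrVd[OF PT])
  have "Psi m n r (functional_at_one m n r \<Phi>) = \<Phi>"
    by (rule PT_eq_if_eq_on_GLV[OF Psi_PT[OF L] PT]) (simp add: Gamma_eq_Psi_on_GLV[OF Phi])
  from this[symmetric] L show "\<Phi> \<in> Psi m n r ` TrVd m n r" by (rule image_eqI)
qed

theorem proposition3p19:
  fixes m n r :: nat
  shows "(\<forall>L \<in> TrVd m n r. Psi m n r L \<in> PT m n r)
    \<and> (\<forall>L \<in> TrVd m n r. \<forall>L' \<in> TrVd m n r. Psi m n r (dadd L L') = fadd (Psi m n r L) (Psi m n r L'))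
    \<and> (\<forall>c \<in> Lam. \<forall>L \<in> TrVd m n r. Psi m n r (dsmul c L) = fsmul c (Psi m n r L))
    \<and> Psi m n r ` TrVd m n r \<subseteq> Gamma m n r
    \<and> bij_betw (Psi m n r) (TrVd m n r) (Gamma m n r)
    \<and> (\<forall>g \<in> GLV m n. \<forall>L \<in> TrVd m n r. Psi m n r (rho_dual m n r g L) = Lhat m n r g (Psi m n r L))"
proof -
  have image: "Psi m n r ` TrVd m n r \<subseteq> Gamma m n r" using Psi_Gamma by blast
  have "bij_betw (Psi m n r) (TrVd m n r) (Gamma m n r)"
    unfolding bij_betw_def using Psi_inj image Gamma_subset_Psi_image by blast
  with image show ?thesis by (simp add: Psi_PT Psi_add Psi_smul Psi_equiv)
qed

end
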